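(* Let $J_1,J_2$ be cones with joins. Then ${\rm Lin}(J_1,J_2)$, with pointwise operations and the order $\le_L$, is a cone with joins, and for every family $(L_i)_{i\in I}\subset{\rm Lin}(J_1,J_2)$ and $v\in J_1$: $$\Big(\textstyle\sup^L_{i\in I}L_i\Big)(v)=\sup\Big\{\sum_{j=1}^nL_{i_j}(v_j):\ n\ge1,\ i_1,\dots,i_n\in I,\ v_1,\dots,v_n\in J_1,\ \sum_{j=1}^nv_j=v\Big\},$$ $$\Big(\textstyle\inf^L_{i\in I}L_i\Big)(v)=\inf\Big\{\sum_{j=1}^nL_{i_j}(v_j):\ n\ge1,\ i_1,\dots,i_n\in I,\ v_1,\dots,v_n\in J_1,\ \sum_{j=1}^nv_j=v\Big\},$$ where $\sup^L,\inf^L$ are supremum and infimum with respect to $\le_L$, and for $I=\emptyset$ the infimum is the map equal to $0$ at $0$ and to $\infty$ elsewhere (and the supremum is the zero map). In particular $(L_1\vee_LL_2)(v)=\sup_{v_1+v_2=v}L_1(v_1)+L_2(v_2)$ and $(L_1\wedge_LL_2)(v)=\inf_{v_1+v_2=v}L_1(v_1)+L_2(v_2)$. Moreover, $\le_L$ coincides with the pointwise order on ${\rm Lin}(J_1,J_2)$.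
   Context: A prewedge is a set $W$ with a commutative associative addition with neutral element $0$ and a multiplication $[0,\infty)\times W\to W$ such that $\lambda(\eta v)=(\lambda\eta)v$, $0v=0$, $1v=v$, $(\lambda+\eta)v=\lambda v+\eta v$, $\lambda(v+w)=\lambda v+\lambda w$; it carries the preorder $v\le w$ iff $v+z=w$ for some $z$. A wedge is a prewedge in which $\le$ is antisymmetric and $v=\sup_{\eta<1}\eta v$ for every $v$. A cone is a wedge in which every directed subset (every finite subset of it, including the empty one, has an upper bound in it) has a supremum; its maximum is denoted $\infty$. A cone with joins is a cone $J$ in which every subset $A$ has an infimum and $\inf(v+A)=v+\inf A$ for all $v\in J$, $A\subset J$. A map $L:W_1\to W_2$ between prewedges is linear if $L(\lambda_1v_1+\lambda_2v_2)=\lambda_1L(v_1)+\lambda_2L(v_2)$ for all $\lambda_i\ge0$, $v_i\in W_1$. ${\rm Lin}(W_1,W_2)$ is the set of linear maps with pointwise sum and scalar multiplication, and $L_1\le_LL_2$ iff $L_1+M=L_2$ for some $M\in{\rm Lin}(W_1,W_2)$. *)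

theory Defs
  imports Complex_Main
begin

text \<open>A (pre)wedge is represented by an explicit carrier set together with
  its addition, neutral element and scalar multiplication (only scalars
  \<open>\<lambda> \<ge> 0\<close> are meaningful).\<close>

record 'a pwstr =
  wcar :: "'a set"
  wadd :: "'a \<Rightarrow> 'a \<Rightarrow> 'a"
  wzero :: 'a
  wsmul :: "real \<Rightarrow> 'a \<Rightarrow> 'a"

definition prewedge :: "('a, 'm) pwstr_scheme \<Rightarrow> bool" where
  "prewedge W \<longleftrightarrow>
     wzero W \<in> wcar W \<and>
     (\<forall>v\<in>wcar W. \<forall>w\<in>wcar W. wadd W v w \<in> wcar W) \<and>
     (\<forall>l\<ge>0. \<forall>v\<in>wcar W. wsmul W l v \<in> wcar W) \<and>
     (\<forall>v\<in>wcar W. \<forall>w\<in>wcar W. wadd W v w = wadd W w v) \<and>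
     (\<forall>u\<in>wcar W. \<forall>v\<in>wcar W. \<forall>w\<in>wcar W. wadd W (wadd W u v) w = wadd W u (wadd W v w)) \<and>
     (\<forall>v\<in>wcar W. wadd W v (wzero W) = v) \<and>
     (\<forall>l\<ge>0. \<forall>e\<ge>0. \<forall>v\<in>wcar W. wsmul W l (wsmul W e v) = wsmul W (l * e) v) \<and>
     (\<forall>v\<in>wcar W. wsmul W 0 v = wzero W) \<and>
     (\<forall>v\<in>wcar W. wsmul W 1 v = v) \<and>
     (\<forall>l\<ge>0. \<forall>e\<ge>0. \<forall>v\<in>wcar W. wsmul W (l + e) v = wadd W (wsmul W l v) (wsmul W e v)) \<and>
     (\<forall>l\<ge>0. \<forall>v\<in>wcar W. \<forall>w\<in>wcar W. wsmul W l (wadd W v w) = wadd W (wsmul W l v) (wsmul W l w))"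

definition wle :: "('a, 'm) pwstr_scheme \<Rightarrow> 'a \<Rightarrow> 'a \<Rightarrow> bool" where
  "wle W v w \<longleftrightarrow> v \<in> wcar W \<and> w \<in> wcar W \<and> (\<exists>z\<in>wcar W. wadd W v z = w)"

definition is_lub :: "('a, 'm) pwstr_scheme \<Rightarrow> 'a set \<Rightarrow> 'a \<Rightarrow> bool" where
  "is_lub W A s \<longleftrightarrow> s \<in> wcar W \<and> (\<forall>a\<in>A. wle W a s) \<and>
     (\<forall>u\<in>wcar W. (\<forall>a\<in>A. wle W a u) \<longrightarrow> wle W s u)"

definition is_glb :: "('a, 'm) pwstr_scheme \<Rightarrow> 'a set \<Rightarrow> 'a \<Rightarrow> bool" where
  "is_glb W A s \<longleftrightarrow> s \<in> wcar W \<and> (\<forall>a\<in>A. wle W s a) \<and>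
     (\<forall>u\<in>wcar W. (\<forall>a\<in>A. wle W u a) \<longrightarrow> wle W u s)"

definition wedge :: "('a, 'm) pwstr_scheme \<Rightarrow> bool" where
  "wedge W \<longleftrightarrow> prewedge W \<and>
     (\<forall>v\<in>wcar W. \<forall>w\<in>wcar W. wle W v w \<and> wle W w v \<longrightarrow> v = w) \<and>
     (\<forall>v\<in>wcar W. is_lub W {wsmul W e v | e. 0 \<le> e \<and> e < 1} v)"

text \<open>Directed subset: every finite subset (including the empty one) has an
  upper bound inside the set.\<close>
definition directed :: "('a, 'm) pwstr_scheme \<Rightarrow> 'a set \<Rightarrow> bool" where
  "directed W D \<longleftrightarrow> D \<subseteq> wcar W \<and>
     (\<forall>F. finite F \<and> F \<subseteq> D \<longrightarrow> (\<exists>u\<in>D. \<forall>a\<in>F. wle W a u))"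

definition cone :: "('a, 'm) pwstr_scheme \<Rightarrow> bool" where
  "cone W \<longleftrightarrow> wedge W \<and> (\<forall>D. directed W D \<longrightarrow> (\<exists>s. is_lub W D s))"

definition cone_with_joins :: "('a, 'm) pwstr_scheme \<Rightarrow> bool" where
  "cone_with_joins J \<longleftrightarrow> cone J \<and>
     (\<forall>A. A \<subseteq> wcar J \<longrightarrow>
        (\<exists>i. is_glb J A i) \<and>
        (\<forall>v\<in>wcar J. \<forall>i. is_glb J A i \<longrightarrow> is_glb J (wadd J v ` A) (wadd J v i)))"

definition linear_map :: "('a, 'm) pwstr_scheme \<Rightarrow> ('b, 'n) pwstr_scheme \<Rightarrow> ('a \<Rightarrow> 'b) \<Rightarrow> bool" where
  "linear_map W1 W2 L \<longleftrightarrow>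
     (\<forall>v\<in>wcar W1. L v \<in> wcar W2) \<and>
     (\<forall>l1\<ge>0. \<forall>l2\<ge>0. \<forall>v1\<in>wcar W1. \<forall>v2\<in>wcar W1.
        L (wadd W1 (wsmul W1 l1 v1) (wsmul W1 l2 v2)) = wadd W2 (wsmul W2 l1 (L v1)) (wsmul W2 l2 (L v2)))"

text \<open>\<open>Lin(W1,W2)\<close>: linear maps (made extensional, i.e. \<open>undefined\<close> off the
  carrier of \<open>W1\<close>) with pointwise operations.\<close>
definition Lin :: "('a, 'm) pwstr_scheme \<Rightarrow> ('b, 'n) pwstr_scheme \<Rightarrow> ('a \<Rightarrow> 'b) pwstr" where
  "Lin W1 W2 = \<lparr> wcar = {L. linear_map W1 W2 L \<and> (\<forall>v. v \<notin> wcar W1 \<longrightarrow> L v = undefined)},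
     wadd = (\<lambda>L M v. if v \<in> wcar W1 then wadd W2 (L v) (M v) else undefined),
     wzero = (\<lambda>v. if v \<in> wcar W1 then wzero W2 else undefined),
     wsmul = (\<lambda>c L v. if v \<in> wcar W1 then wsmul W2 c (L v) else undefined) \<rparr>"

fun wsum :: "('a, 'm) pwstr_scheme \<Rightarrow> (nat \<Rightarrow> 'a) \<Rightarrow> nat \<Rightarrow> 'a" where
  "wsum W f 0 = wzero W"
| "wsum W f (Suc n) = wadd W (wsum W f n) (f n)"

definition decomp_sums ::
  "('a, 'm) pwstr_scheme \<Rightarrow> ('b, 'n) pwstr_scheme \<Rightarrow> 'i set \<Rightarrow> ('i \<Rightarrow> 'a \<Rightarrow> 'b) \<Rightarrow> 'a \<Rightarrow> 'b set" where
  "decomp_sums J1 J2 I Lf v =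
     {wsum J2 (\<lambda>j. Lf (idx j) (vs j)) n | n idx vs.
        n \<ge> 1 \<and> (\<forall>j<n. idx j \<in> I) \<and> (\<forall>j<n. vs j \<in> wcar J1) \<and> wsum J1 vs n = v}"

end

theory Submission
  imports Defs
begin

text \<open>
  In a cone with joins every set has an infimum and infima commute with translations. This yields
  the Riesz decomposition property (x \<le> u1 + u2 splits as x1 + x2 with x1 \<le> u1, x2 \<le> u2), the
  distributivity of suprema of nonempty sets over addition, and, for a \<le> p, a greatest residual r
  with a + r = p, which is additive and positively homogeneous in (a, p); the residual is controlled
  by the absorbing part inf {\<lambda> p | \<lambda> > 0}, the largest element absorbed by p. Computed pointwise,
  the residual of L \<le> M is therefore a linear map, so the order of Lin(J1, J2) is the pointwise
  order.

  Positive homogeneity is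
  immediate; additivity holds because, by the Riesz property, every decomposition sum for v + w
  lies above and below sums of decomposition sums for v and for w. The empty infimum is the map
  that is 0 at 0 and \<infinity> elsewhere, and infima in Lin(J1, J2) commute with translations because
  the decomposition sums of L + L_i are those of L_i shifted by L(v).
\<close>

section \<open>Prewedges and wedges\<close>

locale prewedge_structure =
  fixes W :: "('a, 'm) pwstr_scheme"
  assumes prewedge: "prewedge W"
begin

lemma zero_closed [simp]: "wzero W \<in> wcar W"
  and add_closed [simp]: "x \<in> wcar W \<Longrightarrow> y \<in> wcar W \<Longrightarrow> wadd W x y \<in> wcar W"
  and smul_closed [simp]: "0 \<le> l \<Longrightarrow> x \<in> wcar W \<Longrightarrow> wsmul W l x \<in> wcar W"
  and add_commute: "x \<in> wcar W \<Longrightarrow> y \<in> wcar W \<Longrightarrow> wadd W x y = wadd W y x"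
  and add_assoc: "x \<in> wcar W \<Longrightarrow> y \<in> wcar W \<Longrightarrow> z \<in> wcar W \<Longrightarrow>
      wadd W (wadd W x y) z = wadd W x (wadd W y z)"
  and add_zero_right [simp]: "x \<in> wcar W \<Longrightarrow> wadd W x (wzero W) = x"
  and smul_smul: "0 \<le> l \<Longrightarrow> 0 \<le> e \<Longrightarrow> x \<in> wcar W \<Longrightarrow> wsmul W l (wsmul W e x) = wsmul W (l * e) x"
  and smul_zero_left [simp]: "x \<in> wcar W \<Longrightarrow> wsmul W 0 x = wzero W"
  and smul_one [simp]: "x \<in> wcar W \<Longrightarrow> wsmul W 1 x = x"
  and smul_add_left: "0 \<le> l \<Longrightarrow> 0 \<le> e \<Longrightarrow> x \<in> wcar W \<Longrightarrow>
      wsmul W (l + e) x = wadd W (wsmul W l x) (wsmul W e x)"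
  and smul_add_right: "0 \<le> l \<Longrightarrow> x \<in> wcar W \<Longrightarrow> y \<in> wcar W \<Longrightarrow>
      wsmul W l (wadd W x y) = wadd W (wsmul W l x) (wsmul W l y)"
  using prewedge unfolding prewedge_def by auto

lemma add_zero_left [simp]: "x \<in> wcar W \<Longrightarrow> wadd W (wzero W) x = x"
  by (metis add_commute add_zero_right zero_closed)

lemma add_left_commute:
  "x \<in> wcar W \<Longrightarrow> y \<in> wcar W \<Longrightarrow> z \<in> wcar W \<Longrightarrow> wadd W x (wadd W y z) = wadd W y (wadd W x z)"
  by (metis add_assoc add_commute)

lemma add_right_commute:
  "x \<in> wcar W \<Longrightarrow> y \<in> wcar W \<Longrightarrow> z \<in> wcar W \<Longrightarrow> wadd W (wadd W x y) z = wadd W (wadd W x z) y"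
  by (metis add_assoc add_commute)

lemma add_add_swap:
  "x \<in> wcar W \<Longrightarrow> y \<in> wcar W \<Longrightarrow> z \<in> wcar W \<Longrightarrow> u \<in> wcar W \<Longrightarrow>
   wadd W (wadd W x y) (wadd W z u) = wadd W (wadd W x z) (wadd W y u)"
  by (metis add_assoc add_closed add_left_commute)

lemma smul_zero_right [simp]: "0 \<le> l \<Longrightarrow> wsmul W l (wzero W) = wzero W"
  by (metis mult_zero_right order_refl smul_smul smul_zero_left zero_closed)

lemma smul_inverse [simp]: "0 < l \<Longrightarrow> x \<in> wcar W \<Longrightarrow> wsmul W (1 / l) (wsmul W l x) = x"
  by (simp add: smul_smul)

lemma le_carrier: "wle W x y \<Longrightarrow> x \<in> wcar W \<and> y \<in> wcar W"
  unfolding wle_def by blast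

lemma le_refl [simp]: "x \<in> wcar W \<Longrightarrow> wle W x x"
  unfolding wle_def by (metis add_zero_right zero_closed)

lemma le_trans [trans]: "wle W x y \<Longrightarrow> wle W y z \<Longrightarrow> wle W x z"
  unfolding wle_def by (metis add_closed add_assoc)

lemma le_add_right: "x \<in> wcar W \<Longrightarrow> y \<in> wcar W \<Longrightarrow> wle W x (wadd W x y)"
  unfolding wle_def by auto

lemma le_add_left: "x \<in> wcar W \<Longrightarrow> y \<in> wcar W \<Longrightarrow> wle W y (wadd W x y)"
  using add_commute le_add_right by metis

lemma zero_le: "x \<in> wcar W \<Longrightarrow> wle W (wzero W) x"
  using le_add_right[of "wzero W" x] by simp

lemma add_right_mono: "wle W x y \<Longrightarrow> z \<in> wcar W \<Longrightarrow> wle W (wadd W x z) (wadd W y z)"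
  unfolding wle_def by (metis add_closed add_assoc add_commute)

lemma add_left_mono: "wle W x y \<Longrightarrow> z \<in> wcar W \<Longrightarrow> wle W (wadd W z x) (wadd W z y)"
  using add_right_mono add_commute le_carrier by metis

lemma add_mono: "wle W x y \<Longrightarrow> wle W x' y' \<Longrightarrow> wle W (wadd W x x') (wadd W y y')"
  by (meson add_right_mono add_left_mono le_carrier le_trans)

lemma smul_mono: "0 \<le> l \<Longrightarrow> wle W x y \<Longrightarrow> wle W (wsmul W l x) (wsmul W l y)"
  unfolding wle_def by (metis smul_add_right smul_closed)

lemma smul_mono_scalar: "0 \<le> l \<Longrightarrow> l \<le> e \<Longrightarrow> x \<in> wcar W \<Longrightarrow> wle W (wsmul W l x) (wsmul W e x)"
  using smul_add_left[of l "e - l" x] le_add_right[of "wsmul W l x" "wsmul W (e - l) x"] by simp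

lemma is_lub_least: "is_lub W A s \<Longrightarrow> x \<in> wcar W \<Longrightarrow> (\<And>a. a \<in> A \<Longrightarrow> wle W a x) \<Longrightarrow> wle W s x"
  unfolding is_lub_def by simp

lemma wsum_closed [simp]: "(\<And>j. j < n \<Longrightarrow> f j \<in> wcar W) \<Longrightarrow> wsum W f n \<in> wcar W"
  by (induction n) auto

lemma wsum_cong: "(\<And>j. j < n \<Longrightarrow> f j = g j) \<Longrightarrow> wsum W f n = wsum W g n"
  by (induction n) auto

lemma wsum_const_zero: "wsum W (\<lambda>j. wzero W) n = wzero W"
  by (induction n) auto

lemma wsum_add: "(\<And>j. j < n \<Longrightarrow> f j \<in> wcar W) \<Longrightarrow> (\<And>j. j < n \<Longrightarrow> g j \<in> wcar W) \<Longrightarrow>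
   wsum W (\<lambda>j. wadd W (f j) (g j)) n = wadd W (wsum W f n) (wsum W g n)"
  by (induction n) (simp_all add: add_add_swap)

lemma wsum_smul: "0 \<le> l \<Longrightarrow> (\<And>j. j < n \<Longrightarrow> f j \<in> wcar W) \<Longrightarrow>
   wsum W (\<lambda>j. wsmul W l (f j)) n = wsmul W l (wsum W f n)"
  by (induction n) (auto simp: smul_add_right)

lemma wsum_mono: "(\<And>j. j < n \<Longrightarrow> wle W (f j) (g j)) \<Longrightarrow> wle W (wsum W f n) (wsum W g n)"
  by (induction n) (auto intro: add_mono)

lemma wsum_append: "(\<And>j. j < n \<Longrightarrow> f j \<in> wcar W) \<Longrightarrow> (\<And>j. j < m \<Longrightarrow> g j \<in> wcar W) \<Longrightarrow>
   wsum W (\<lambda>j. if j < n then f j else g (j - n)) (n + m) = wadd W (wsum W f n) (wsum W g m)"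
proof (induction m)
  case 0
  have "wsum W (\<lambda>j. if j < n then f j else g (j - n)) n = wsum W f n"
    by (rule wsum_cong) simp
  then show ?case using 0 by simp
next
  case (Suc m)
  then show ?case by (simp add: add_assoc)
qed

end

locale wedge_structure =
  fixes W :: "('a, 'm) pwstr_scheme"
  assumes wedge: "wedge W"

sublocale wedge_structure \<subseteq> prewedge_structure
  using wedge unfolding wedge_def by unfold_locales blast

context wedge_structure
begin

lemma le_antisym: "wle W x y \<Longrightarrow> wle W y x \<Longrightarrow> x = y"
  using wedge le_carrier unfolding wedge_def by blast

lemma lub_approx_from_below: "x \<in> wcar W \<Longrightarrow> is_lub W {wsmul W e x | e. 0 \<le> e \<and> e < 1} x"
  using wedge unfolding wedge_def by blast

lemma lub_unique: "is_lub W A s \<Longrightarrow> is_lub W A s' \<Longrightarrow> s = s'"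
  unfolding is_lub_def by (meson le_antisym)

lemma glb_unique: "is_glb W A i \<Longrightarrow> is_glb W A i' \<Longrightarrow> i = i'"
  unfolding is_glb_def by (meson le_antisym)

lemma le_zero_iff: "wle W x (wzero W) \<longleftrightarrow> x = wzero W"
  using zero_le le_antisym le_carrier by auto

lemma add_eq_zero: "x \<in> wcar W \<Longrightarrow> y \<in> wcar W \<Longrightarrow> wadd W x y = wzero W \<Longrightarrow> x = wzero W"
  by (metis le_add_right le_zero_iff)

lemma wsum_eq_zero:
  assumes "\<And>j. j < n \<Longrightarrow> f j \<in> wcar W" and "wsum W f n = wzero W" and "j < n"
  shows "f j = wzero W"
  using assms
proof (induction n)
  case (Suc n)
  have closed: "wsum W f n \<in> wcar W" "f n \<in> wcar W"
    using Suc.prems(1) by simp_all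
  have "wsum W f n = wzero W" "f n = wzero W"
    using Suc.prems(2) add_eq_zero[OF closed] add_eq_zero[OF closed(2,1)] add_commute[OF closed]
    by simp_all
  then show ?case
    using Suc by (cases "j < n") (auto simp: less_Suc_eq)
qed simp

lemma smul_eq_zero: "0 < l \<Longrightarrow> x \<in> wcar W \<Longrightarrow> wsmul W l x = wzero W \<longleftrightarrow> x = wzero W"
  by (metis smul_inverse smul_zero_right less_eq_real_def zero_le_divide_1_iff)

end

section \<open>Cones with joins\<close>

locale cone_structure =
  fixes W :: "('a, 'm) pwstr_scheme"
  assumes cone: "cone W"

sublocale cone_structure \<subseteq> wedge_structure
  using cone unfolding cone_def by unfold_locales blast

context cone_structure
begin

lemma finite_upper_bound: "finite F \<Longrightarrow> F \<subseteq> wcar W \<Longrightarrow> \<exists>u\<in>wcar W. \<forall>a\<in>F. wle W a u"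
proof (induction F rule: finite_induct)
  case (insert x F)
  then obtain u where u: "u \<in> wcar W" "\<forall>a\<in>F. wle W a u" by auto
  have x: "x \<in> wcar W" using insert.prems by simp
  have "\<forall>a\<in>insert x F. wle W a (wadd W u x)"
    using u x le_add_right le_add_left le_trans by blast
  then show ?case using u x add_closed by blast
qed (use zero_closed in blast)


definition wtop :: 'a where
  "wtop = (SOME s. is_lub W (wcar W) s)"

lemma wtop_lub: "is_lub W (wcar W) wtop"
proof -
  have "directed W (wcar W)"
    unfolding directed_def using finite_upper_bound by blast
  then show ?thesis
    unfolding wtop_def using cone unfolding cone_def by (metis someI_ex)
qed

lemma wtop_closed [simp]: "wtop \<in> wcar W"
  and le_wtop: "x \<in> wcar W \<Longrightarrow> wle W x wtop"
  using wtop_lub unfolding is_lub_def by simp_all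

lemma add_wtop: "x \<in> wcar W \<Longrightarrow> wadd W x wtop = wtop"
  by (meson add_closed le_add_left le_antisym le_wtop wtop_closed)

lemma smul_wtop: "0 < l \<Longrightarrow> wsmul W l wtop = wtop"
proof -
  assume l: "0 < l"
  have "wle W (wsmul W l (wsmul W (1 / l) wtop)) (wsmul W l wtop)"
    using l le_wtop by (intro smul_mono) auto
  then have "wle W wtop (wsmul W l wtop)"
    using l by (simp add: smul_smul)
  then show ?thesis
    using le_antisym le_wtop l by (meson less_imp_le smul_closed wtop_closed)
qed

end

locale cone_with_joins_structure =
  fixes J :: "('a, 'm) pwstr_scheme"
  assumes cone_with_joins: "cone_with_joins J"

sublocale cone_with_joins_structure \<subseteq> cone_structure J
  using cone_with_joins unfolding cone_with_joins_def by unfold_locales blast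

context cone_with_joins_structure
begin

definition winf :: "'a set \<Rightarrow> 'a" where
  "winf A = (SOME i. is_glb J A i)"

lemma winf_glb: "A \<subseteq> wcar J \<Longrightarrow> is_glb J A (winf A)"
  using cone_with_joins unfolding cone_with_joins_def winf_def by (metis someI_ex)

lemma winf_eqI: "is_glb J A i \<Longrightarrow> winf A = i"
  using glb_unique unfolding winf_def by (metis someI_ex)

lemma winf_closed: "A \<subseteq> wcar J \<Longrightarrow> winf A \<in> wcar J"
  and winf_le: "A \<subseteq> wcar J \<Longrightarrow> a \<in> A \<Longrightarrow> wle J (winf A) a"
  and le_winf: "A \<subseteq> wcar J \<Longrightarrow> x \<in> wcar J \<Longrightarrow> (\<And>a. a \<in> A \<Longrightarrow> wle J x a) \<Longrightarrow> wle J x (winf A)"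
  using winf_glb unfolding is_glb_def by simp_all

lemma winf_add: "A \<subseteq> wcar J \<Longrightarrow> v \<in> wcar J \<Longrightarrow> winf (wadd J v ` A) = wadd J v (winf A)"
  using cone_with_joins winf_glb unfolding cone_with_joins_def by (metis winf_eqI)

lemma winf_singleton [simp]: "x \<in> wcar J \<Longrightarrow> winf {x} = x"
  by (rule winf_eqI) (simp add: is_glb_def)

lemma winf_pair: "wle J x y \<Longrightarrow> winf {x, y} = x"
  by (rule winf_eqI) (auto simp: is_glb_def le_carrier)

definition wsup :: "'a set \<Rightarrow> 'a" where
  "wsup A = winf {u \<in> wcar J. \<forall>a\<in>A. wle J a u}"

lemma wsup_lub: "A \<subseteq> wcar J \<Longrightarrow> is_lub J A (wsup A)"
proof -
  assume A: "A \<subseteq> wcar J"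
  have U: "{u \<in> wcar J. \<forall>a\<in>A. wle J a u} \<subseteq> wcar J" by blast
  show ?thesis
    unfolding is_lub_def wsup_def using winf_closed[OF U] winf_le[OF U] le_winf[OF U] A by blast
qed

lemma wsup_eqI: "is_lub J A s \<Longrightarrow> A \<subseteq> wcar J \<Longrightarrow> wsup A = s"
  using wsup_lub lub_unique by metis

lemma wsup_closed: "A \<subseteq> wcar J \<Longrightarrow> wsup A \<in> wcar J"
  and le_wsup: "A \<subseteq> wcar J \<Longrightarrow> a \<in> A \<Longrightarrow> wle J a (wsup A)"
  and wsup_le: "A \<subseteq> wcar J \<Longrightarrow> x \<in> wcar J \<Longrightarrow> (\<And>a. a \<in> A \<Longrightarrow> wle J a x) \<Longrightarrow> wle J (wsup A) x"
  using wsup_lub unfolding is_lub_def by simp_all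

lemma wsup_empty [simp]: "wsup {} = wzero J"
  using wsup_eqI[of "{}" "wzero J"] zero_le unfolding is_lub_def by auto

lemma wsup_singleton [simp]: "x \<in> wcar J \<Longrightarrow> wsup {x} = x"
  by (rule wsup_eqI) (simp_all add: is_lub_def)

lemma smul_winf: "0 < l \<Longrightarrow> A \<subseteq> wcar J \<Longrightarrow> wsmul J l (winf A) = winf (wsmul J l ` A)"
proof -
  assume l: "0 < l" and A: "A \<subseteq> wcar J"
  have lA: "wsmul J l ` A \<subseteq> wcar J" using A l by auto
  have "wle J (wsmul J (1 / l) (winf (wsmul J l ` A))) (winf A)"
  proof (rule le_winf[OF A])
    fix a assume a: "a \<in> A"
    have "wle J (wsmul J (1 / l) (winf (wsmul J l ` A))) (wsmul J (1 / l) (wsmul J l a))"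
      using l a lA by (intro smul_mono winf_le) auto
    then show "wle J (wsmul J (1 / l) (winf (wsmul J l ` A))) a"
      using l a A by auto
  qed (use l lA winf_closed in auto)
  then have "wle J (wsmul J l (wsmul J (1 / l) (winf (wsmul J l ` A)))) (wsmul J l (winf A))"
    using l by (intro smul_mono) auto
  then have "wle J (winf (wsmul J l ` A)) (wsmul J l (winf A))"
    using l winf_closed[OF lA] by (simp add: smul_smul)
  moreover have "wle J (wsmul J l (winf A)) (winf (wsmul J l ` A))"
    using l A lA winf_closed[OF A] by (intro le_winf) (auto intro: smul_mono winf_le)
  ultimately show ?thesis using le_antisym by blast
qed

lemma smul_wsup: "0 < l \<Longrightarrow> A \<subseteq> wcar J \<Longrightarrow> wsmul J l (wsup A) = wsup (wsmul J l ` A)"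
proof -
  assume l: "0 < l" and A: "A \<subseteq> wcar J"
  have lA: "wsmul J l ` A \<subseteq> wcar J" using A l by auto
  have "wle J (wsup A) (wsmul J (1 / l) (wsup (wsmul J l ` A)))"
  proof (rule wsup_le[OF A])
    fix a assume a: "a \<in> A"
    have "wle J (wsmul J (1 / l) (wsmul J l a)) (wsmul J (1 / l) (wsup (wsmul J l ` A)))"
      using l a lA by (intro smul_mono le_wsup) auto
    then show "wle J a (wsmul J (1 / l) (wsup (wsmul J l ` A)))"
      using l a A by auto
  qed (use l wsup_closed[OF lA] in simp)
  then have "wle J (wsmul J l (wsup A)) (wsmul J l (wsmul J (1 / l) (wsup (wsmul J l ` A))))"
    using l by (intro smul_mono) auto
  then have "wle J (wsmul J l (wsup A)) (wsup (wsmul J l ` A))"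
    using l wsup_closed[OF lA] by (simp add: smul_smul)
  moreover have "wle J (wsup (wsmul J l ` A)) (wsmul J l (wsup A))"
    using l A lA wsup_closed[OF A] by (intro wsup_le) (auto intro: smul_mono le_wsup)
  ultimately show ?thesis using le_antisym by blast
qed

lemma winf_mono:
  assumes A: "A \<subseteq> wcar J" and B: "B \<subseteq> wcar J" and below: "\<And>b. b \<in> B \<Longrightarrow> \<exists>a\<in>A. wle J a b"
  shows "wle J (winf A) (winf B)"
proof (rule le_winf[OF B winf_closed[OF A]])
  fix b assume "b \<in> B"
  then obtain a where "a \<in> A" "wle J a b" using below by blast
  then show "wle J (winf A) b" using winf_le[OF A] le_trans by blast
qed

lemma wsup_mono:
  assumes A: "A \<subseteq> wcar J" and B: "B \<subseteq> wcar J" and above: "\<And>a. a \<in> A \<Longrightarrow> \<exists>b\<in>B. wle J a b"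
  shows "wle J (wsup A) (wsup B)"
proof (rule wsup_le[OF A wsup_closed[OF B]])
  fix a assume "a \<in> A"
  then obtain b where "b \<in> B" "wle J a b" using above by blast
  then show "wle J a (wsup B)" using le_wsup[OF B] le_trans by blast
qed

lemma winf_antimono: "A \<subseteq> B \<Longrightarrow> B \<subseteq> wcar J \<Longrightarrow> wle J (winf B) (winf A)"
  by (rule winf_mono) (auto intro: le_refl)

lemma wsup_mono_subset: "A \<subseteq> B \<Longrightarrow> B \<subseteq> wcar J \<Longrightarrow> wle J (wsup A) (wsup B)"
  by (rule wsup_mono) (auto intro: le_refl)

lemma winf_add_winf:
  assumes A: "A \<subseteq> wcar J" and B: "B \<subseteq> wcar J"
  shows "wadd J (winf A) (winf B) = winf {wadd J a b | a b. a \<in> A \<and> b \<in> B}"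
proof -
  let ?AB = "{wadd J a b | a b. a \<in> A \<and> b \<in> B}"
  have AB: "?AB \<subseteq> wcar J" using A B add_closed by blast
  have "wle J (winf ?AB) (wadd J (winf A) b)" if b: "b \<in> B" for b
  proof -
    have "wadd J (winf A) b = winf (wadd J b ` A)"
      using winf_add[OF A, of b] winf_closed[OF A] b B add_commute by auto
    moreover have "wadd J b ` A \<subseteq> ?AB"
      using A B b add_commute by blast
    then have "wle J (winf ?AB) (winf (wadd J b ` A))"
      using AB by (rule winf_antimono)
    ultimately show ?thesis by simp
  qed
  then have "wle J (winf ?AB) (winf (wadd J (winf A) ` B))"
    using AB B winf_closed[OF A] winf_closed[OF AB] by (intro le_winf) auto
  then have "wle J (winf ?AB) (wadd J (winf A) (winf B))"
    using winf_add[OF B winf_closed[OF A]] by simp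
  moreover have "wle J (wadd J (winf A) (winf B)) (winf ?AB)"
    using A B winf_closed[OF A] winf_closed[OF B] by (intro le_winf[OF AB]) (auto intro: add_mono winf_le)
  ultimately show ?thesis using le_antisym by blast
qed

lemma winf_smul_gt_one: "p \<in> wcar J \<Longrightarrow> winf {wsmul J m p | m. 1 < m} = p"
proof -
  assume p: "p \<in> wcar J"
  define X where "X = {wsmul J m p | m. 1 < m}"
  have X: "X \<subseteq> wcar J" using p unfolding X_def by auto
  let ?P = "winf X"
  have P: "?P \<in> wcar J" using winf_closed[OF X] .
  have "wle J p ?P"
  proof (rule le_winf[OF X p])
    fix a assume "a \<in> X"
    then obtain m where "1 < m" "a = wsmul J m p" unfolding X_def by auto
    then show "wle J p a" using smul_mono_scalar[of 1 m p] p by simp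
  qed
  moreover have "wle J ?P p"
  proof (rule is_lub_least[OF lub_approx_from_below[OF P] p])
    fix a assume "a \<in> {wsmul J e ?P | e. 0 \<le> e \<and> e < 1}"
    then obtain e where e: "0 \<le> e" "e < 1" "a = wsmul J e ?P" by auto
    show "wle J a p"
    proof (cases "e = 0")
      case True
      then show ?thesis using e p P zero_le by simp
    next
      case False
      then have e0: "0 < e" using e by simp
      then have "wsmul J (1 / e) p \<in> X" using e unfolding X_def by auto
      then have "wle J (wsmul J e ?P) (wsmul J e (wsmul J (1 / e) p))"
        using e0 winf_le[OF X] smul_mono by simp
      then show ?thesis using e e0 p by (simp add: smul_smul)
    qed
  qed
  ultimately show ?thesis using le_antisym unfolding X_def by blast
qed

definition absorbing_part :: "'a \<Rightarrow> 'a" where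
  "absorbing_part p = winf {wsmul J l p | l. 0 < l}"

lemma positive_multiples_closed: "p \<in> wcar J \<Longrightarrow> {wsmul J l p | l. 0 < l} \<subseteq> wcar J"
  by auto

lemma absorbing_part_closed [simp]: "p \<in> wcar J \<Longrightarrow> absorbing_part p \<in> wcar J"
  unfolding absorbing_part_def using winf_closed positive_multiples_closed by blast

lemma absorbing_part_le_smul: "p \<in> wcar J \<Longrightarrow> 0 < l \<Longrightarrow> wle J (absorbing_part p) (wsmul J l p)"
  unfolding absorbing_part_def by (rule winf_le[OF positive_multiples_closed]) auto

lemma add_absorbing_part [simp]: "p \<in> wcar J \<Longrightarrow> wadd J p (absorbing_part p) = p"
proof -
  assume p: "p \<in> wcar J"
  have "wadd J p ` {wsmul J l p | l. 0 < l} = {wsmul J m p | m. 1 < m}"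
  proof -
    have shift: "wadd J p (wsmul J l p) = wsmul J (1 + l) p" if "0 < l" for l
      using smul_add_left[of 1 l p] that p by simp
    have "wsmul J m p = wadd J p (wsmul J (m - 1) p)" if "1 < m" for m
      using shift[of "m - 1"] that by simp
    show ?thesis
    proof (intro set_eqI iffI)
      fix x assume "x \<in> wadd J p ` {wsmul J l p | l. 0 < l}"
      then obtain l where "0 < l" "x = wadd J p (wsmul J l p)" by blast
      then show "x \<in> {wsmul J m p | m. 1 < m}" using shift by force
    next
      fix x assume "x \<in> {wsmul J m p | m. 1 < m}"
      then obtain m where m: "1 < m" "x = wsmul J m p" by blast
      then have "wsmul J (m - 1) p \<in> {wsmul J l p | l. 0 < l}" by auto
      then show "x \<in> wadd J p ` {wsmul J l p | l. 0 < l}" using m shift[of "m - 1"] by force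
    qed
  qed
  then show ?thesis
    unfolding absorbing_part_def
    using winf_add[OF positive_multiples_closed[OF p] p] winf_smul_gt_one[OF p] by simp
qed

lemma add_smul_nat_absorbed:
  "p \<in> wcar J \<Longrightarrow> r \<in> wcar J \<Longrightarrow> wadd J p r = p \<Longrightarrow> wadd J p (wsmul J (real n) r) = p"
proof (induction n)
  case (Suc n)
  have "wsmul J (real (Suc n)) r = wadd J (wsmul J (real n) r) r"
    using smul_add_left[of "real n" 1 r] Suc.prems by (simp add: add.commute)
  then show ?case using Suc by (simp flip: add_assoc)
qed simp

lemma absorbing_part_greatest:
  assumes p: "p \<in> wcar J" and r: "r \<in> wcar J" and absorbed: "wadd J p r = p"
  shows "wle J r (absorbing_part p)"
  unfolding absorbing_part_def
proof (rule le_winf[OF positive_multiples_closed[OF p] r])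
  fix b assume "b \<in> {wsmul J l p | l. 0 < l}"
  then obtain l where l: "0 < l" "b = wsmul J l p" by auto
  obtain n :: nat where n: "1 / l < real n" using reals_Archimedean2 by blast
  have n0: "0 < real n" using n l by (smt (verit) divide_pos_pos)
  have "wle J (wsmul J (real n) r) p"
    using add_smul_nat_absorbed[OF p r absorbed, of n] le_add_left[of p "wsmul J (real n) r"] p r
    by simp
  then have "wle J (wsmul J (1 / real n) (wsmul J (real n) r)) (wsmul J (1 / real n) p)"
    using smul_mono n0 by simp
  then have "wle J r (wsmul J (1 / real n) p)" using n0 r by simp
  also have "wle J (wsmul J (1 / real n) p) (wsmul J l p)"
    using smul_mono_scalar n l n0 p by (simp add: field_simps)
  finally show "wle J r b" using l by simp
qed

lemma smul_absorbing_part [simp]: "0 < l \<Longrightarrow> p \<in> wcar J \<Longrightarrow> wsmul J l (absorbing_part p) = absorbing_part p"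
proof -
  assume l: "0 < l" and p: "p \<in> wcar J"
  have "wsmul J l ` {wsmul J m p | m. 0 < m} = {wsmul J m p | m. 0 < m}"
  proof (intro set_eqI iffI)
    fix x assume "x \<in> wsmul J l ` {wsmul J m p | m. 0 < m}"
    then obtain m where m: "0 < m" "x = wsmul J l (wsmul J m p)" by blast
    then have "x = wsmul J (l * m) p" "0 < l * m" using l p by (auto simp: smul_smul)
    then show "x \<in> {wsmul J m p | m. 0 < m}" by blast
  next
    fix x assume "x \<in> {wsmul J m p | m. 0 < m}"
    then obtain m where m: "0 < m" "x = wsmul J m p" by blast
    then have "x = wsmul J l (wsmul J (m / l) p)" using l p by (simp add: smul_smul)
    moreover have "wsmul J (m / l) p \<in> {wsmul J m p | m. 0 < m}" using m l by auto
    ultimately show "x \<in> wsmul J l ` {wsmul J m p | m. 0 < m}" by blast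
  qed
  then show ?thesis
    unfolding absorbing_part_def using smul_winf[OF l positive_multiples_closed[OF p]] by simp
qed

lemma absorbing_part_le_absorbing_partI:
  assumes t: "t \<in> wcar J" and le: "wle J (absorbing_part t) x"
  shows "wle J (absorbing_part t) (absorbing_part x)"
proof -
  have x: "x \<in> wcar J" using le le_carrier by blast
  show ?thesis
    unfolding absorbing_part_def[of x]
  proof (rule le_winf[OF positive_multiples_closed[OF x] absorbing_part_closed[OF t]])
    fix b assume "b \<in> {wsmul J l x | l. 0 < l}"
    then obtain l where l: "0 < l" "b = wsmul J l x" by auto
    then show "wle J (absorbing_part t) b"
      using smul_mono[OF _ le, of l] t by simp
  qed
qed

lemma le_add_absorbing_partI:
  assumes p: "p \<in> wcar J" and y: "y \<in> wcar J" and x: "x \<in> wcar J"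
    and le: "\<And>l. 0 < l \<Longrightarrow> wle J x (wadd J y (wsmul J l p))"
  shows "wle J x (wadd J y (absorbing_part p))"
proof -
  have "wle J x (winf (wadd J y ` {wsmul J l p | l. 0 < l}))"
    using p y x le by (intro le_winf) auto
  then show ?thesis
    unfolding absorbing_part_def using winf_add[OF positive_multiples_closed[OF p] y] by simp
qed

lemma absorbing_part_add:
  assumes p: "p \<in> wcar J" and q: "q \<in> wcar J"
  shows "wle J (absorbing_part (wadd J p q)) (wadd J (absorbing_part p) (absorbing_part q))"
proof -
  have pq: "wadd J p q \<in> wcar J" using p q by simp
  have smul_smul_bound:
    "wle J (absorbing_part (wadd J p q)) (wadd J (wsmul J l p) (wsmul J m q))" if "0 < l" "0 < m" for l m
  proof -
    define n where "n = min l m"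
    have n: "0 < n" "n \<le> l" "n \<le> m" using that unfolding n_def by auto
    have "wle J (absorbing_part (wadd J p q)) (wsmul J n (wadd J p q))"
      using absorbing_part_le_smul[OF pq n(1)] .
    also have "wsmul J n (wadd J p q) = wadd J (wsmul J n p) (wsmul J n q)"
      using smul_add_right n p q by simp
    also have "wle J \<dots> (wadd J (wsmul J l p) (wsmul J m q))"
      using n p q by (intro add_mono smul_mono_scalar) auto
    finally show ?thesis .
  qed
  have "wle J (absorbing_part (wadd J p q)) (wadd J (wsmul J m q) (absorbing_part p))" if "0 < m" for m
    using p q pq that smul_smul_bound add_commute by (intro le_add_absorbing_partI) auto
  then show ?thesis
    using p q pq add_commute by (intro le_add_absorbing_partI) auto
qed

lemma absorbed_mono:
  assumes le: "wle J t t'" and r: "r \<in> wcar J" and absorbed: "wadd J t r = t"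
  shows "wadd J t' r = t'"
proof -
  obtain d where d: "d \<in> wcar J" "wadd J t d = t'" using le unfolding wle_def by blast
  have t: "t \<in> wcar J" using le le_carrier by blast
  have "wadd J t' r = wadd J (wadd J t r) d"
    using d t r by (metis add_assoc add_commute)
  then show ?thesis using absorbed d by simp
qed

lemma add_left_le_cancel:
  assumes c: "c \<in> wcar J" and x: "x \<in> wcar J" and y: "y \<in> wcar J"
    and le: "wle J (wadd J c x) (wadd J c y)"
  shows "wle J x (wadd J y (absorbing_part (wadd J c y)))"
proof -
  define m where "m = winf {x, y}"
  have xy: "{x, y} \<subseteq> wcar J" using x y by auto
  have m: "m \<in> wcar J" "wle J m x" "wle J m y"
    unfolding m_def using winf_closed[OF xy] winf_le[OF xy] by auto
  have "wadd J c m = winf (wadd J c ` {x, y})"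
    unfolding m_def using winf_add[OF xy c] by simp
  then have cm: "wadd J c m = wadd J c x" using winf_pair[OF le] by simp
  obtain r where r: "r \<in> wcar J" "wadd J m r = x" using m(2) unfolding wle_def by blast
  have "wadd J (wadd J c m) r = wadd J c m" using add_assoc[OF c m(1) r(1)] r(2) cm by simp
  then have "wadd J (wadd J c y) r = wadd J c y"
    using absorbed_mono[OF add_left_mono[OF m(3) c] r(1)] by simp
  then have "wle J r (absorbing_part (wadd J c y))"
    using absorbing_part_greatest c y r by simp
  then have "wle J (wadd J y r) (wadd J y (absorbing_part (wadd J c y)))"
    using add_left_mono y by blast
  moreover have "wle J x (wadd J y r)" using r add_right_mono[OF m(3) r(1)] by simp
  ultimately show ?thesis using le_trans by blast
qed

lemma wsup_add:
  assumes Z: "Z \<subseteq> wcar J" "Z \<noteq> {}" and a: "a \<in> wcar J"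
  shows "wadd J a (wsup Z) = wsup (wadd J a ` Z)"
proof -
  have aZ: "wadd J a ` Z \<subseteq> wcar J" using Z a by auto
  define t where "t = wsup (wadd J a ` Z)"
  have t: "t \<in> wcar J" unfolding t_def using wsup_closed[OF aZ] .
  obtain z0 where z0: "z0 \<in> Z" using Z by auto
  have "wle J a t"
    using le_add_right[of a z0] le_wsup[OF aZ, of "wadd J a z0"] z0 Z a le_trans unfolding t_def by blast
  then obtain d where d: "d \<in> wcar J" "wadd J a d = t" unfolding wle_def by blast
  have "wle J z (wadd J d (absorbing_part t))" if z: "z \<in> Z" for z
  proof -
    have "wle J (wadd J a z) (wadd J a d)" using d le_wsup[OF aZ] z unfolding t_def by auto
    then show ?thesis using add_left_le_cancel[OF a _ d(1)] z Z d by auto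
  qed
  then have "wle J (wsup Z) (wadd J d (absorbing_part t))" using Z d t by (intro wsup_le) auto
  then have "wle J (wadd J a (wsup Z)) (wadd J a (wadd J d (absorbing_part t)))"
    using add_left_mono a by blast
  also have "wadd J a (wadd J d (absorbing_part t)) = t"
    using d a t by (simp flip: add_assoc)
  finally have "wle J (wadd J a (wsup Z)) t" .
  moreover have "wle J t (wadd J a (wsup Z))"
    unfolding t_def using aZ Z a wsup_closed[OF Z(1)] by (intro wsup_le) (auto intro: add_left_mono le_wsup)
  ultimately show ?thesis using le_antisym unfolding t_def by blast
qed

lemma wsup_add_wsup:
  assumes A: "A \<subseteq> wcar J" "A \<noteq> {}" and B: "B \<subseteq> wcar J" "B \<noteq> {}"
  shows "wadd J (wsup A) (wsup B) = wsup {wadd J a b | a b. a \<in> A \<and> b \<in> B}"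
proof -
  let ?AB = "{wadd J a b | a b. a \<in> A \<and> b \<in> B}"
  have AB: "?AB \<subseteq> wcar J" using A B add_closed by blast
  have "wle J (wadd J (wsup A) b) (wsup ?AB)" if b: "b \<in> B" for b
  proof -
    have "wadd J (wsup A) b = wsup (wadd J b ` A)"
      using wsup_add[OF A, of b] wsup_closed[OF A(1)] b B add_commute by auto
    moreover have "wadd J b ` A \<subseteq> ?AB"
      using A B b add_commute by blast
    then have "wle J (wsup (wadd J b ` A)) (wsup ?AB)"
      using AB by (rule wsup_mono_subset)
    ultimately show ?thesis by simp
  qed
  then have "wle J (wsup (wadd J (wsup A) ` B)) (wsup ?AB)"
    using AB B wsup_closed[OF A(1)] wsup_closed[OF AB] by (intro wsup_le) auto
  then have "wle J (wadd J (wsup A) (wsup B)) (wsup ?AB)"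
    using wsup_add[OF B wsup_closed[OF A(1)]] by simp
  moreover have "wle J (wsup ?AB) (wadd J (wsup A) (wsup B))"
    using A B wsup_closed[OF A(1)] wsup_closed[OF B(1)] by (intro wsup_le[OF AB]) (auto intro: add_mono le_wsup)
  ultimately show ?thesis using le_antisym by blast
qed

lemma riesz_decomposition:
  assumes le: "wle J x (wadd J u1 u2)" and u1: "u1 \<in> wcar J" and u2: "u2 \<in> wcar J"
  shows "\<exists>x1 x2. x1 \<in> wcar J \<and> x2 \<in> wcar J \<and> wadd J x1 x2 = x \<and> wle J x1 u1 \<and> wle J x2 u2"
proof -
  have x: "x \<in> wcar J" using le le_carrier by blast
  define x1 where "x1 = winf {x, u1}"
  have xu: "{x, u1} \<subseteq> wcar J" using x u1 by auto
  have x1: "x1 \<in> wcar J" "wle J x1 x" "wle J x1 u1"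
    unfolding x1_def using winf_closed[OF xu] winf_le[OF xu] by auto
  have "wadd J u2 x1 = winf (wadd J u2 ` {x, u1})" unfolding x1_def using winf_add[OF xu u2] by simp
  moreover have "wle J x (winf (wadd J u2 ` {x, u1}))"
    using xu u2 x le by (intro le_winf) (auto intro: le_add_left simp: add_commute)
  ultimately have x_le: "wle J x (wadd J x1 u2)" using add_commute x1 u2 by simp
  define S where "S = {z \<in> wcar J. wle J x (wadd J x1 z)}"
  define x2 where "x2 = winf S"
  have S: "S \<subseteq> wcar J" unfolding S_def by auto
  have x2: "x2 \<in> wcar J" unfolding x2_def using winf_closed[OF S] .
  have "wle J x2 u2" unfolding x2_def using winf_le[OF S] x_le u2 S_def by auto
  obtain d where d: "d \<in> wcar J" "wadd J x1 d = x" using x1(2) unfolding wle_def by blast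
  have "wadd J x1 x2 = winf (wadd J x1 ` S)" unfolding x2_def using winf_add[OF S x1(1)] by simp
  moreover have "wle J x (winf (wadd J x1 ` S))" using S x x1 by (intro le_winf) (auto simp: S_def)
  moreover have "wle J (winf (wadd J x1 ` S)) x"
  proof -
    have "d \<in> S" using d x unfolding S_def by auto
    then have "wle J (winf (wadd J x1 ` S)) (wadd J x1 d)"
      using S x1 by (intro winf_le) auto
    then show ?thesis using d by simp
  qed
  ultimately have "wadd J x1 x2 = x" using le_antisym by metis
  then show ?thesis using x1 x2 \<open>wle J x2 u2\<close> by blast
qed

definition residual :: "'a \<Rightarrow> 'a \<Rightarrow> 'a" where
  "residual a p = wsup {z \<in> wcar J. wle J (wadd J a z) p}"

lemma residual_closed [simp]: "residual a p \<in> wcar J"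
  unfolding residual_def by (rule wsup_closed) blast

lemma le_residualI: "z \<in> wcar J \<Longrightarrow> wle J (wadd J a z) p \<Longrightarrow> wle J z (residual a p)"
  unfolding residual_def by (rule le_wsup) auto

lemma add_residual:
  assumes a: "wle J a p"
  shows "wadd J a (residual a p) = p"
proof -
  have ap: "a \<in> wcar J" "p \<in> wcar J" using a le_carrier by auto
  define Z where "Z = {z \<in> wcar J. wle J (wadd J a z) p}"
  have Z: "Z \<subseteq> wcar J" unfolding Z_def by auto
  obtain d where d: "d \<in> wcar J" "wadd J a d = p" using a unfolding wle_def by blast
  have dZ: "d \<in> Z" using d ap unfolding Z_def by auto
  have "wadd J a (residual a p) = wsup (wadd J a ` Z)"
    unfolding residual_def Z_def[symmetric] using wsup_add[OF Z _ ap(1)] dZ by blast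
  moreover have "wle J (wsup (wadd J a ` Z)) p" using Z ap by (intro wsup_le) (auto simp: Z_def)
  moreover have "wle J p (wadd J a (residual a p))"
    using d add_left_mono[OF le_residualI[OF d(1)] ap(1)] ap by simp
  ultimately show ?thesis using le_antisym by metis
qed

lemma residual_unique:
  assumes a: "a \<in> wcar J" and b: "b \<in> wcar J" "wadd J a b = p"
    and greatest: "\<And>z. z \<in> wcar J \<Longrightarrow> wle J (wadd J a z) p \<Longrightarrow> wle J z b"
  shows "residual a p = b"
proof -
  have ap: "wle J a p" using a b le_add_right by blast
  have "wle J (residual a p) b" using greatest add_residual[OF ap] ap le_carrier by simp
  moreover have "wle J b (residual a p)"
    using le_residualI[OF b(1), of a p] b(2) le_carrier[OF ap] by simp
  ultimately show ?thesis using le_antisym by blast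
qed

lemma le_add_residuals:
  assumes a1: "wle J a1 p" and a2: "wle J a2 q"
    and w: "w \<in> wcar J" and le: "wle J (wadd J (wadd J a1 a2) w) (wadd J p q)"
  shows "wle J w (wadd J (residual a1 p) (residual a2 q))"
proof -
  have closed: "a1 \<in> wcar J" "p \<in> wcar J" "a2 \<in> wcar J" "q \<in> wcar J" using a1 a2 le_carrier by auto
  define b1 b2 where "b1 = residual a1 p" and "b2 = residual a2 q"
  have b: "b1 \<in> wcar J" "b2 \<in> wcar J" "wadd J a1 b1 = p" "wadd J a2 b2 = q"
    unfolding b1_def b2_def using add_residual a1 a2 by auto
  let ?B = "wadd J b1 b2"
  have "wadd J (wadd J a1 a2) ?B = wadd J p q"
    using add_add_swap[of a1 a2 b1 b2] closed b by simp
  then have "wle J w (wadd J ?B (absorbing_part (wadd J p q)))"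
    using add_left_le_cancel[of "wadd J a1 a2" w ?B] le closed b w by simp
  also have "wle J \<dots> (wadd J ?B (wadd J (absorbing_part p) (absorbing_part q)))"
    using absorbing_part_add closed add_left_mono b by simp
  also have "wle J \<dots> (wadd J ?B (wadd J (absorbing_part b1) (absorbing_part b2)))"
  proof -
    have "wle J (absorbing_part p) b1" "wle J (absorbing_part q) b2"
      unfolding b1_def b2_def
      using add_right_mono[OF a1, of "absorbing_part p"] add_right_mono[OF a2, of "absorbing_part q"] closed
      by (auto intro!: le_residualI)
    then have "wle J (wadd J (absorbing_part p) (absorbing_part q))
                 (wadd J (absorbing_part b1) (absorbing_part b2))"
      using absorbing_part_le_absorbing_partI closed add_mono by simp
    then show ?thesis using b add_left_mono by simp
  qed
  also have "wadd J ?B (wadd J (absorbing_part b1) (absorbing_part b2)) = ?B"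
    using add_add_swap[of b1 b2 "absorbing_part b1" "absorbing_part b2"] b by simp
  finally show ?thesis unfolding b1_def b2_def .
qed

lemma residual_add:
  assumes a1: "wle J a1 p" and a2: "wle J a2 q"
  shows "residual (wadd J a1 a2) (wadd J p q) = wadd J (residual a1 p) (residual a2 q)"
proof (rule residual_unique)
  have closed: "a1 \<in> wcar J" "p \<in> wcar J" "a2 \<in> wcar J" "q \<in> wcar J" using a1 a2 le_carrier by auto
  then show "wadd J a1 a2 \<in> wcar J" by simp
  show "wadd J (residual a1 p) (residual a2 q) \<in> wcar J" by simp
  show "wadd J (wadd J a1 a2) (wadd J (residual a1 p) (residual a2 q)) = wadd J p q"
    using add_add_swap[of a1 a2 "residual a1 p" "residual a2 q"] closed add_residual a1 a2 by simp
qed (use le_add_residuals[OF a1 a2] in blast)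

lemma residual_smul:
  assumes l: "0 < l" and a: "wle J a p"
  shows "residual (wsmul J l a) (wsmul J l p) = wsmul J l (residual a p)"
proof (rule residual_unique)
  have closed: "a \<in> wcar J" "p \<in> wcar J" using a le_carrier by auto
  then show "wsmul J l a \<in> wcar J" "wsmul J l (residual a p) \<in> wcar J" using l by simp_all
  show "wadd J (wsmul J l a) (wsmul J l (residual a p)) = wsmul J l p"
    using smul_add_right[of l a "residual a p"] add_residual[OF a] l closed by simp
next
  fix z assume z: "z \<in> wcar J" and "wle J (wadd J (wsmul J l a) z) (wsmul J l p)"
  then have "wle J (wsmul J (1 / l) (wadd J (wsmul J l a) z)) (wsmul J (1 / l) (wsmul J l p))"
    using l by (intro smul_mono) auto
  then have "wle J (wadd J a (wsmul J (1 / l) z)) p"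
    using l z a le_carrier by (simp add: smul_add_right)
  then have "wle J (wsmul J (1 / l) z) (residual a p)"
    using l z by (intro le_residualI) auto
  then have "wle J (wsmul J l (wsmul J (1 / l) z)) (wsmul J l (residual a p))"
    using l by (intro smul_mono) auto
  then show "wle J z (wsmul J l (residual a p))"
    using l z by (simp add: smul_smul)
qed

lemma riesz_refinement:
  assumes le: "wle J (wadd J r1 r2) (wadd J p q)" and r: "r1 \<in> wcar J" "r2 \<in> wcar J"
    and pq: "p \<in> wcar J" "q \<in> wcar J"
  shows "\<exists>a1 a2 b1 b2. a1 \<in> wcar J \<and> a2 \<in> wcar J \<and> b1 \<in> wcar J \<and> b2 \<in> wcar J \<and>
     wadd J a1 b1 = p \<and> wadd J a2 b2 = q \<and> wle J r1 (wadd J a1 a2) \<and> wle J r2 (wadd J b1 b2)"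
proof -
  have "wle J r1 (wadd J p q)" using le_trans[OF le_add_right le] r by blast
  then obtain a1 a2 where a: "a1 \<in> wcar J" "a2 \<in> wcar J" "wadd J a1 a2 = r1" "wle J a1 p" "wle J a2 q"
    using riesz_decomposition pq by blast
  have "wle J r2 (wadd J (residual a1 p) (residual a2 q))"
    using le_add_residuals[OF a(4,5) r(2)] le a by simp
  moreover have "wle J r1 (wadd J a1 a2)" using a r le_refl by simp
  ultimately show ?thesis
    using a(1,2) add_residual[OF a(4)] add_residual[OF a(5)] residual_closed by blast
qed

lemma riesz_decomposition_wsum:
  assumes "wle J x (wsum J s m)" and "\<And>j. j < m \<Longrightarrow> s j \<in> wcar J"
  shows "\<exists>y. (\<forall>j<m. y j \<in> wcar J \<and> wle J (y j) (s j)) \<and> wsum J y m = x"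
  using assms
proof (induction m arbitrary: x)
  case 0
  then show ?case using le_zero_iff by simp
next
  case (Suc m)
  have sm: "wsum J s m \<in> wcar J" "s m \<in> wcar J" using Suc.prems(2) by simp_all
  obtain x1 x2 where x: "x1 \<in> wcar J" "x2 \<in> wcar J" "wadd J x1 x2 = x"
      "wle J x1 (wsum J s m)" "wle J x2 (s m)"
    using riesz_decomposition[OF _ sm] Suc.prems(1) by (metis wsum.simps(2))
  obtain y where y: "\<forall>j<m. y j \<in> wcar J \<and> wle J (y j) (s j)" "wsum J y m = x1"
    using Suc.IH[OF x(4)] Suc.prems(2) by (metis less_SucI)
  have "wsum J (y(m := x2)) m = wsum J y m" by (rule wsum_cong) simp
  then have "wsum J (y(m := x2)) (Suc m) = x" using y x by simp
  moreover have "\<forall>j<Suc m. (y(m := x2)) j \<in> wcar J \<and> wle J ((y(m := x2)) j) (s j)"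
    using y(1) x(2,5) by (auto simp: less_Suc_eq)
  ultimately show ?case by blast
qed

lemma add_le_wsum_split:
  assumes "wle J (wadd J r1 r2) (wsum J s m)" and "r1 \<in> wcar J" and "r2 \<in> wcar J"
    and "\<And>j. j < m \<Longrightarrow> s j \<in> wcar J"
  shows "\<exists>m1 m2. (\<forall>j<m. m1 j \<in> wcar J \<and> m2 j \<in> wcar J \<and> wle J (wadd J (m1 j) (m2 j)) (s j)) \<and>
     wle J r1 (wsum J m1 m) \<and> wle J r2 (wsum J m2 m)"
  using assms
proof (induction m arbitrary: r1 r2)
  case 0
  then have "wadd J r1 r2 = wzero J" using le_zero_iff by simp
  then have "r1 = wzero J" "r2 = wzero J"
    using add_eq_zero[OF 0(2,3)] add_eq_zero[OF 0(3,2)] add_commute[OF 0(2,3)] by simp_all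
  then show ?case by auto
next
  case (Suc m)
  have sm: "wsum J s m \<in> wcar J" "s m \<in> wcar J" using Suc.prems(4) by simp_all
  obtain a1 a2 b1 b2 where ab: "a1 \<in> wcar J" "a2 \<in> wcar J" "b1 \<in> wcar J" "b2 \<in> wcar J"
     "wadd J a1 b1 = wsum J s m" "wadd J a2 b2 = s m" "wle J r1 (wadd J a1 a2)" "wle J r2 (wadd J b1 b2)"
    using riesz_refinement[OF _ Suc.prems(2,3) sm] Suc.prems(1) by auto
  obtain m1 m2 where mm: "\<forall>j<m. m1 j \<in> wcar J \<and> m2 j \<in> wcar J \<and> wle J (wadd J (m1 j) (m2 j)) (s j)"
      "wle J a1 (wsum J m1 m)" "wle J b1 (wsum J m2 m)"
    using Suc.IH[of a1 b1] ab(1,3,5) Suc.prems(4) sm(1) by (metis le_refl less_SucI)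
  have "wsum J (m1(m := a2)) m = wsum J m1 m" "wsum J (m2(m := b2)) m = wsum J m2 m"
    by (rule wsum_cong, simp)+
  then have "wsum J (m1(m := a2)) (Suc m) = wadd J (wsum J m1 m) a2"
    and "wsum J (m2(m := b2)) (Suc m) = wadd J (wsum J m2 m) b2" by simp_all
  then have "wle J r1 (wsum J (m1(m := a2)) (Suc m))" "wle J r2 (wsum J (m2(m := b2)) (Suc m))"
    using le_trans[OF ab(7) add_right_mono[OF mm(2) ab(2)]]
      le_trans[OF ab(8) add_right_mono[OF mm(3) ab(4)]] by simp_all
  moreover have "\<forall>j<Suc m. (m1(m := a2)) j \<in> wcar J \<and> (m2(m := b2)) j \<in> wcar J \<and>
      wle J (wadd J ((m1(m := a2)) j) ((m2(m := b2)) j)) (s j)"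
    using mm(1) ab(2,4,6) sm by (auto simp: less_Suc_eq)
  ultimately show ?case by blast
qed

lemma wsum_le_add_split:
  assumes "wle J (wsum J u n) (wadd J v w)" and "\<And>j. j < n \<Longrightarrow> u j \<in> wcar J"
    and "v \<in> wcar J" and "w \<in> wcar J"
  shows "\<exists>c d. (\<forall>j<n. c j \<in> wcar J \<and> d j \<in> wcar J \<and> wle J (u j) (wadd J (c j) (d j))) \<and>
     wle J (wsum J c n) v \<and> wle J (wsum J d n) w"
  using assms
proof (induction n arbitrary: v w)
  case 0
  then show ?case using zero_le by (intro exI[of _ "\<lambda>j. wzero J"]) auto
next
  case (Suc n)
  have un: "wsum J u n \<in> wcar J" "u n \<in> wcar J" using Suc.prems(2) by simp_all
  obtain a1 a2 b1 b2 where ab: "a1 \<in> wcar J" "a2 \<in> wcar J" "b1 \<in> wcar J" "b2 \<in> wcar J"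
     "wadd J a1 b1 = v" "wadd J a2 b2 = w" "wle J (wsum J u n) (wadd J a1 a2)" "wle J (u n) (wadd J b1 b2)"
    using riesz_refinement[OF _ un Suc.prems(3,4)] Suc.prems(1) by auto
  obtain c d where cd: "\<forall>j<n. c j \<in> wcar J \<and> d j \<in> wcar J \<and> wle J (u j) (wadd J (c j) (d j))"
      "wle J (wsum J c n) a1" "wle J (wsum J d n) a2"
    using Suc.IH[OF ab(7) _ ab(1,2)] Suc.prems(2) by (metis less_SucI)
  have "wsum J (c(n := b1)) n = wsum J c n" "wsum J (d(n := b2)) n = wsum J d n"
    by (rule wsum_cong, simp)+
  then have "wsum J (c(n := b1)) (Suc n) = wadd J (wsum J c n) b1"
    and "wsum J (d(n := b2)) (Suc n) = wadd J (wsum J d n) b2" by simp_all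
  then have "wle J (wsum J (c(n := b1)) (Suc n)) v" "wle J (wsum J (d(n := b2)) (Suc n)) w"
    using add_right_mono[OF cd(2) ab(3)] add_right_mono[OF cd(3) ab(4)] ab(5,6) by simp_all
  moreover have "\<forall>j<Suc n. (c(n := b1)) j \<in> wcar J \<and> (d(n := b2)) j \<in> wcar J \<and>
      wle J (u j) (wadd J ((c(n := b1)) j) ((d(n := b2)) j))"
    using cd(1) ab(3,4,8) by (auto simp: less_Suc_eq)
  ultimately show ?case by blast
qed

end

section \<open>Linear maps\<close>

locale linear_maps = J1: prewedge_structure J1 + J2: prewedge_structure J2
  for J1 :: "('a, 'm) pwstr_scheme" and J2 :: "('b, 'n) pwstr_scheme"
begin

lemma Lin_carrier_iff:
  "L \<in> wcar (Lin J1 J2) \<longleftrightarrow> linear_map J1 J2 L \<and> (\<forall>v. v \<notin> wcar J1 \<longrightarrow> L v = undefined)"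
  and Lin_add: "wadd (Lin J1 J2) L M = (\<lambda>v. if v \<in> wcar J1 then wadd J2 (L v) (M v) else undefined)"
  and Lin_zero: "wzero (Lin J1 J2) = (\<lambda>v. if v \<in> wcar J1 then wzero J2 else undefined)"
  and Lin_smul: "wsmul (Lin J1 J2) c L = (\<lambda>v. if v \<in> wcar J1 then wsmul J2 c (L v) else undefined)"
  by (simp_all add: Lin_def)

lemma linear_map_closed: "linear_map J1 J2 L \<Longrightarrow> v \<in> wcar J1 \<Longrightarrow> L v \<in> wcar J2"
  unfolding linear_map_def by blast

lemma linear_map_combination:
  "linear_map J1 J2 L \<Longrightarrow> 0 \<le> l1 \<Longrightarrow> 0 \<le> l2 \<Longrightarrow> v1 \<in> wcar J1 \<Longrightarrow> v2 \<in> wcar J1 \<Longrightarrow>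
   L (wadd J1 (wsmul J1 l1 v1) (wsmul J1 l2 v2)) = wadd J2 (wsmul J2 l1 (L v1)) (wsmul J2 l2 (L v2))"
  unfolding linear_map_def by blast

lemma linear_map_add:
  "linear_map J1 J2 L \<Longrightarrow> v \<in> wcar J1 \<Longrightarrow> w \<in> wcar J1 \<Longrightarrow> L (wadd J1 v w) = wadd J2 (L v) (L w)"
  using linear_map_combination[of L 1 1 v w] linear_map_closed by simp

lemma linear_map_smul:
  "linear_map J1 J2 L \<Longrightarrow> 0 \<le> l \<Longrightarrow> v \<in> wcar J1 \<Longrightarrow> L (wsmul J1 l v) = wsmul J2 l (L v)"
  using linear_map_combination[of L l 0 v v] linear_map_closed by simp

lemma linear_map_zero: "linear_map J1 J2 L \<Longrightarrow> L (wzero J1) = wzero J2"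
  using linear_map_smul[of L 0 "wzero J1"] linear_map_closed by simp

lemma linear_map_mono: "linear_map J1 J2 L \<Longrightarrow> wle J1 v w \<Longrightarrow> wle J2 (L v) (L w)"
  unfolding wle_def using linear_map_add linear_map_closed by metis

lemma linear_map_wsum:
  "linear_map J1 J2 L \<Longrightarrow> (\<And>j. j < n \<Longrightarrow> f j \<in> wcar J1) \<Longrightarrow> L (wsum J1 f n) = wsum J2 (\<lambda>j. L (f j)) n"
  by (induction n) (simp_all add: linear_map_zero linear_map_add)

lemma linear_mapI:
  assumes closed: "\<And>v. v \<in> wcar J1 \<Longrightarrow> f v \<in> wcar J2"
    and add: "\<And>v w. v \<in> wcar J1 \<Longrightarrow> w \<in> wcar J1 \<Longrightarrow> f (wadd J1 v w) = wadd J2 (f v) (f w)"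
    and smul: "\<And>l v. 0 < l \<Longrightarrow> v \<in> wcar J1 \<Longrightarrow> f (wsmul J1 l v) = wsmul J2 l (f v)"
    and zero: "f (wzero J1) = wzero J2"
  shows "linear_map J1 J2 f"
proof -
  have "f (wsmul J1 l v) = wsmul J2 l (f v)" if "0 \<le> l" "v \<in> wcar J1" for l v
    using that zero closed smul[of l v] by (cases "l = 0") simp_all
  then show ?thesis unfolding linear_map_def using closed add by simp
qed

lemma LinD: "L \<in> wcar (Lin J1 J2) \<Longrightarrow> linear_map J1 J2 L"
  unfolding Lin_carrier_iff by blast

lemma Lin_apply_closed: "L \<in> wcar (Lin J1 J2) \<Longrightarrow> v \<in> wcar J1 \<Longrightarrow> L v \<in> wcar J2"
  using linear_map_closed LinD by blast

lemma Lin_restrictI: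
  assumes "linear_map J1 J2 f"
  shows "(\<lambda>v. if v \<in> wcar J1 then f v else undefined) \<in> wcar (Lin J1 J2)"
proof -
  have "linear_map J1 J2 (\<lambda>v. if v \<in> wcar J1 then f v else undefined)"
    using assms unfolding linear_map_def by simp
  then show ?thesis unfolding Lin_carrier_iff by simp
qed

lemma Lin_eqI:
  "L \<in> wcar (Lin J1 J2) \<Longrightarrow> M \<in> wcar (Lin J1 J2) \<Longrightarrow> (\<And>v. v \<in> wcar J1 \<Longrightarrow> L v = M v) \<Longrightarrow> L = M"
  unfolding Lin_carrier_iff by (metis ext)

lemma Lin_zero_closed: "wzero (Lin J1 J2) \<in> wcar (Lin J1 J2)"
  unfolding Lin_zero by (intro Lin_restrictI linear_mapI) auto

lemma Lin_add_closed:
  assumes L: "L \<in> wcar (Lin J1 J2)" and M: "M \<in> wcar (Lin J1 J2)"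
  shows "wadd (Lin J1 J2) L M \<in> wcar (Lin J1 J2)"
  unfolding Lin_add
proof (intro Lin_restrictI linear_mapI)
  fix v w assume "v \<in> wcar J1" "w \<in> wcar J1"
  then show "wadd J2 (L (wadd J1 v w)) (M (wadd J1 v w)) = wadd J2 (wadd J2 (L v) (M v)) (wadd J2 (L w) (M w))"
    using J2.add_add_swap Lin_apply_closed L M linear_map_add[OF LinD[OF L]] linear_map_add[OF LinD[OF M]]
    by simp
qed (use L M in \<open>simp_all add: Lin_apply_closed linear_map_smul[OF LinD] linear_map_zero[OF LinD]
      J2.smul_add_right\<close>)

lemma Lin_smul_closed:
  assumes c: "0 \<le> c" and L: "L \<in> wcar (Lin J1 J2)"
  shows "wsmul (Lin J1 J2) c L \<in> wcar (Lin J1 J2)"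
  unfolding Lin_smul
proof (intro Lin_restrictI linear_mapI)
  fix l :: real and v assume "0 < l" "v \<in> wcar J1"
  then show "wsmul J2 c (L (wsmul J1 l v)) = wsmul J2 l (wsmul J2 c (L v))"
    using c L by (simp add: Lin_apply_closed linear_map_smul[OF LinD] J2.smul_smul mult.commute)
qed (use c L in \<open>simp_all add: Lin_apply_closed linear_map_add[OF LinD] linear_map_zero[OF LinD]
      J2.smul_add_right\<close>)

lemma prewedge_Lin: "prewedge (Lin J1 J2)"
proof -
  let ?W = "Lin J1 J2"
  have undef: "L v = undefined" if "L \<in> wcar ?W" "v \<notin> wcar J1" for L v
    using that Lin_carrier_iff by blast
  note closed = Lin_apply_closed
  show ?thesis
    unfolding prewedge_def
  proof (intro conjI allI impI ballI)
    fix L M N assume "L \<in> wcar ?W" "M \<in> wcar ?W" "N \<in> wcar ?W"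
    then show "wadd ?W (wadd ?W L M) N = wadd ?W L (wadd ?W M N)"
      unfolding Lin_add using closed J2.add_assoc by (intro ext) auto
  next
    fix L M assume "L \<in> wcar ?W" "M \<in> wcar ?W"
    then show "wadd ?W L M = wadd ?W M L"
      unfolding Lin_add using closed J2.add_commute by (intro ext) auto
  next
    fix L assume L: "L \<in> wcar ?W"
    then show "wadd ?W L (wzero ?W) = L" "wsmul ?W 1 L = L" "wsmul ?W 0 L = wzero ?W"
      unfolding Lin_add Lin_zero Lin_smul using closed undef[OF L] by (auto intro!: ext)
  next
    fix l e :: real and L assume "0 \<le> l" "0 \<le> e" "L \<in> wcar ?W"
    then show "wsmul ?W l (wsmul ?W e L) = wsmul ?W (l * e) L"
      and "wsmul ?W (l + e) L = wadd ?W (wsmul ?W l L) (wsmul ?W e L)"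
      unfolding Lin_smul Lin_add using closed J2.smul_smul J2.smul_add_left by (auto intro!: ext)
  next
    fix l :: real and L M assume "0 \<le> l" "L \<in> wcar ?W" "M \<in> wcar ?W"
    then show "wsmul ?W l (wadd ?W L M) = wadd ?W (wsmul ?W l L) (wsmul ?W l M)"
      unfolding Lin_smul Lin_add using closed J2.smul_add_right by (auto intro!: ext)
  qed (simp_all add: Lin_zero_closed Lin_add_closed Lin_smul_closed)
qed

end

locale linear_maps_with_joins = J1: cone_with_joins_structure J1 + J2: cone_with_joins_structure J2
  for J1 :: "('a, 'm) pwstr_scheme" and J2 :: "('b, 'n) pwstr_scheme"

sublocale linear_maps_with_joins \<subseteq> linear_maps
  by unfold_locales

context linear_maps_with_joins
begin

lemma linear_map_residual:
  assumes L: "linear_map J1 J2 L" and M: "linear_map J1 J2 M"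
    and le: "\<And>v. v \<in> wcar J1 \<Longrightarrow> wle J2 (L v) (M v)"
  shows "linear_map J1 J2 (\<lambda>v. J2.residual (L v) (M v))"
proof (rule linear_mapI)
  fix v w assume "v \<in> wcar J1" "w \<in> wcar J1"
  then show "J2.residual (L (wadd J1 v w)) (M (wadd J1 v w))
      = wadd J2 (J2.residual (L v) (M v)) (J2.residual (L w) (M w))"
    using J2.residual_add le linear_map_add[OF L] linear_map_add[OF M] by simp
next
  fix l :: real and v assume "0 < l" "v \<in> wcar J1"
  then show "J2.residual (L (wsmul J1 l v)) (M (wsmul J1 l v)) = wsmul J2 l (J2.residual (L v) (M v))"
    using J2.residual_smul le linear_map_smul[OF L] linear_map_smul[OF M] by simp
next
  have "wadd J2 (wzero J2) (J2.residual (wzero J2) (wzero J2)) = wzero J2"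
    using J2.add_residual J2.le_refl by simp
  then show "J2.residual (L (wzero J1)) (M (wzero J1)) = wzero J2"
    using linear_map_zero[OF L] linear_map_zero[OF M] by simp
qed simp

lemma Lin_le_iff:
  assumes L: "L \<in> wcar (Lin J1 J2)" and M: "M \<in> wcar (Lin J1 J2)"
  shows "wle (Lin J1 J2) L M \<longleftrightarrow> (\<forall>v\<in>wcar J1. wle J2 (L v) (M v))"
proof
  assume "wle (Lin J1 J2) L M"
  then obtain N where "N \<in> wcar (Lin J1 J2)" "wadd (Lin J1 J2) L N = M"
    unfolding wle_def by blast
  then show "\<forall>v\<in>wcar J1. wle J2 (L v) (M v)"
    using J2.le_add_right Lin_apply_closed L unfolding Lin_add by auto
next
  assume le: "\<forall>v\<in>wcar J1. wle J2 (L v) (M v)"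
  define N where "N = (\<lambda>v. if v \<in> wcar J1 then J2.residual (L v) (M v) else undefined)"
  have "N \<in> wcar (Lin J1 J2)"
    unfolding N_def using linear_map_residual LinD L M le by (intro Lin_restrictI) auto
  moreover have "wadd (Lin J1 J2) L N = M"
    unfolding N_def Lin_add using le J2.add_residual M Lin_carrier_iff by (intro ext) auto
  ultimately show "wle (Lin J1 J2) L M"
    unfolding wle_def using L M by blast
qed

lemma wedge_Lin: "wedge (Lin J1 J2)"
  unfolding wedge_def
proof (intro conjI ballI impI)
  show "prewedge (Lin J1 J2)" by (rule prewedge_Lin)
next
  fix L M assume "L \<in> wcar (Lin J1 J2)" "M \<in> wcar (Lin J1 J2)"
    and "wle (Lin J1 J2) L M \<and> wle (Lin J1 J2) M L"
  then show "L = M" using Lin_le_iff Lin_eqI J2.le_antisym by meson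
next
  fix L assume L: "L \<in> wcar (Lin J1 J2)"
  let ?A = "{wsmul (Lin J1 J2) e L | e. 0 \<le> e \<and> e < 1}"
  have approx_le: "wle (Lin J1 J2) a L" if "a \<in> ?A" for a
  proof -
    obtain e where e: "0 \<le> e" "e < 1" "a = wsmul (Lin J1 J2) e L" using \<open>a \<in> ?A\<close> by blast
    then show ?thesis
      using Lin_le_iff[OF Lin_smul_closed[OF e(1) L] L] Lin_apply_closed[OF L] J2.smul_mono_scalar[of e 1]
      unfolding Lin_smul by simp
  qed
  have "wle (Lin J1 J2) L U" if U: "U \<in> wcar (Lin J1 J2)" and bound: "\<forall>a\<in>?A. wle (Lin J1 J2) a U" for U
  proof -
    have "wle J2 (L v) (U v)" if v: "v \<in> wcar J1" for v
    proof (rule J2.is_lub_least[OF J2.lub_approx_from_below[OF Lin_apply_closed[OF L v]]])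
      show "U v \<in> wcar J2" using Lin_apply_closed[OF U v] .
      fix a assume "a \<in> {wsmul J2 e (L v) |e. 0 \<le> e \<and> e < 1}"
      then obtain e where e: "0 \<le> e" "e < 1" "a = wsmul J2 e (L v)" by blast
      then have "wle (Lin J1 J2) (wsmul (Lin J1 J2) e L) U" using bound by blast
      then show "wle J2 a (U v)"
        using Lin_le_iff[OF Lin_smul_closed[OF e(1) L] U] v e unfolding Lin_smul by simp
    qed
    then show ?thesis using Lin_le_iff[OF L U] by blast
  qed
  then show "is_lub (Lin J1 J2) ?A L"
    unfolding is_lub_def using L approx_le by blast
qed

end

sublocale linear_maps_with_joins \<subseteq> Lin: wedge_structure "Lin J1 J2"
  by unfold_locales (rule wedge_Lin)

section \<open>Suprema and infima of families of linear maps\<close>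

context linear_maps_with_joins
begin

lemma mem_decomp_sums:
  "d \<in> decomp_sums J1 J2 I Lf v \<longleftrightarrow> (\<exists>n idx vs. n \<ge> 1 \<and> (\<forall>j<n. idx j \<in> I) \<and> (\<forall>j<n. vs j \<in> wcar J1)
     \<and> wsum J1 vs n = v \<and> d = wsum J2 (\<lambda>j. Lf (idx j) (vs j)) n)"
  unfolding decomp_sums_def by blast

lemma decomp_sums_empty [simp]: "decomp_sums J1 J2 {} Lf v = {}"
  unfolding decomp_sums_def by (auto dest: spec[of _ 0])

definition Lin_sup :: "'i set \<Rightarrow> ('i \<Rightarrow> 'a \<Rightarrow> 'b) \<Rightarrow> 'a \<Rightarrow> 'b" where
  "Lin_sup I Lf = (\<lambda>v. if v \<in> wcar J1 then J2.wsup (decomp_sums J1 J2 I Lf v) else undefined)"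

definition Lin_inf :: "'i set \<Rightarrow> ('i \<Rightarrow> 'a \<Rightarrow> 'b) \<Rightarrow> 'a \<Rightarrow> 'b" where
  "Lin_inf I Lf = (\<lambda>v. if v \<in> wcar J1 then J2.winf (decomp_sums J1 J2 I Lf v) else undefined)"

context
  fixes I :: "'i set" and Lf :: "'i \<Rightarrow> 'a \<Rightarrow> 'b"
  assumes family: "Lf ` I \<subseteq> wcar (Lin J1 J2)"
begin

lemma family_linear: "i \<in> I \<Longrightarrow> linear_map J1 J2 (Lf i)"
  using family LinD by blast

lemma decomp_sums_closed: "decomp_sums J1 J2 I Lf v \<subseteq> wcar J2"
  unfolding decomp_sums_def using family_linear linear_map_closed by auto

lemma decomp_sums_single: "i \<in> I \<Longrightarrow> v \<in> wcar J1 \<Longrightarrow> Lf i v \<in> decomp_sums J1 J2 I Lf v"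
  unfolding mem_decomp_sums
  by (intro exI[of _ 1] exI[of _ "\<lambda>j. i"] exI[of _ "\<lambda>j. v"]) (simp add: linear_map_closed family_linear)

lemma decomp_sums_add:
  assumes d1: "d1 \<in> decomp_sums J1 J2 I Lf v" and d2: "d2 \<in> decomp_sums J1 J2 I Lf w"
  shows "wadd J2 d1 d2 \<in> decomp_sums J1 J2 I Lf (wadd J1 v w)"
proof -
  obtain n idx vs where h: "n \<ge> 1" "\<forall>j<n. idx j \<in> I" "\<forall>j<n. vs j \<in> wcar J1" "wsum J1 vs n = v"
      "d1 = wsum J2 (\<lambda>j. Lf (idx j) (vs j)) n"
    using d1 unfolding mem_decomp_sums by blast
  obtain m idx' ws where g: "\<forall>j<m. idx' j \<in> I" "\<forall>j<m. ws j \<in> wcar J1" "wsum J1 ws m = w"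
      "d2 = wsum J2 (\<lambda>j. Lf (idx' j) (ws j)) m"
    using d2 unfolding mem_decomp_sums by blast
  define idx'' where "idx'' = (\<lambda>j. if j < n then idx j else idx' (j - n))"
  define vs' where "vs' = (\<lambda>j. if j < n then vs j else ws (j - n))"
  have "wsum J1 vs' (n + m) = wadd J1 v w"
    unfolding vs'_def using J1.wsum_append[of n vs m ws] h g by simp
  moreover have "wsum J2 (\<lambda>j. Lf (idx'' j) (vs' j)) (n + m)
      = wsum J2 (\<lambda>j. if j < n then Lf (idx j) (vs j) else Lf (idx' (j - n)) (ws (j - n))) (n + m)"
    by (rule J2.wsum_cong) (simp add: idx''_def vs'_def)
  then have "wsum J2 (\<lambda>j. Lf (idx'' j) (vs' j)) (n + m) = wadd J2 d1 d2"
    using J2.wsum_append[of n "\<lambda>j. Lf (idx j) (vs j)" m "\<lambda>j. Lf (idx' j) (ws j)"] h g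
      linear_map_closed family_linear by simp
  moreover have "\<forall>j<n+m. idx'' j \<in> I" "\<forall>j<n+m. vs' j \<in> wcar J1"
    using h g unfolding idx''_def vs'_def by auto
  ultimately show ?thesis
    unfolding mem_decomp_sums using h(1) by (intro exI[of _ "n + m"] exI[of _ idx''] exI[of _ vs']) auto
qed

lemma decomp_sums_smul_subset:
  assumes l: "0 < l" and d: "d \<in> decomp_sums J1 J2 I Lf v"
  shows "wsmul J2 l d \<in> decomp_sums J1 J2 I Lf (wsmul J1 l v)"
proof -
  obtain n idx vs where h: "n \<ge> 1" "\<forall>j<n. idx j \<in> I" "\<forall>j<n. vs j \<in> wcar J1" "wsum J1 vs n = v"
      "d = wsum J2 (\<lambda>j. Lf (idx j) (vs j)) n"
    using d unfolding mem_decomp_sums by blast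
  have "wsum J1 (\<lambda>j. wsmul J1 l (vs j)) n = wsmul J1 l v"
    using J1.wsum_smul l h by simp
  moreover have "wsum J2 (\<lambda>j. Lf (idx j) (wsmul J1 l (vs j))) n = wsum J2 (\<lambda>j. wsmul J2 l (Lf (idx j) (vs j))) n"
    using linear_map_smul family_linear h l by (intro J2.wsum_cong) auto
  then have "wsum J2 (\<lambda>j. Lf (idx j) (wsmul J1 l (vs j))) n = wsmul J2 l d"
    using J2.wsum_smul l h linear_map_closed family_linear by simp
  ultimately show ?thesis
    unfolding mem_decomp_sums using h l
    by (intro exI[of _ n] exI[of _ idx] exI[of _ "\<lambda>j. wsmul J1 l (vs j)"]) auto
qed

lemma decomp_sums_smul:
  assumes l: "0 < l" and v: "v \<in> wcar J1"
  shows "decomp_sums J1 J2 I Lf (wsmul J1 l v) = wsmul J2 l ` decomp_sums J1 J2 I Lf v"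
proof (intro set_eqI iffI)
  fix d assume d: "d \<in> decomp_sums J1 J2 I Lf (wsmul J1 l v)"
  then have "wsmul J2 (1 / l) d \<in> decomp_sums J1 J2 I Lf (wsmul J1 (1 / l) (wsmul J1 l v))"
    using decomp_sums_smul_subset[of "1 / l" d] l by simp
  then have "wsmul J2 (1 / l) d \<in> decomp_sums J1 J2 I Lf v"
    using l v by simp
  moreover have "d \<in> wcar J2" using d decomp_sums_closed by blast
  then have "d = wsmul J2 l (wsmul J2 (1 / l) d)"
    using l by (simp add: J2.smul_smul)
  ultimately show "d \<in> wsmul J2 l ` decomp_sums J1 J2 I Lf v" by blast
qed (use decomp_sums_smul_subset[OF l] in blast)

lemma decomp_sums_zero:
  assumes "I \<noteq> {}"
  shows "decomp_sums J1 J2 I Lf (wzero J1) = {wzero J2}"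
proof -
  have "d = wzero J2" if d: "d \<in> decomp_sums J1 J2 I Lf (wzero J1)" for d
  proof -
    obtain n idx vs where h: "\<forall>j<n. idx j \<in> I" "\<forall>j<n. vs j \<in> wcar J1" "wsum J1 vs n = wzero J1"
        "d = wsum J2 (\<lambda>j. Lf (idx j) (vs j)) n"
      using d unfolding mem_decomp_sums by blast
    have "vs j = wzero J1" if "j < n" for j using J1.wsum_eq_zero[of n vs] h that by blast
    then have "d = wsum J2 (\<lambda>j. wzero J2) n"
      unfolding h(4) using linear_map_zero family_linear h by (intro J2.wsum_cong) auto
    then show ?thesis using J2.wsum_const_zero by simp
  qed
  moreover obtain i where i: "i \<in> I" using assms by blast
  then have "wzero J2 \<in> decomp_sums J1 J2 I Lf (wzero J1)"
    using decomp_sums_single[of i "wzero J1"] linear_map_zero[OF family_linear[OF i]] by simp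
  ultimately show ?thesis by blast
qed

lemma decomp_sums_le_bound:
  assumes N: "linear_map J1 J2 N" and bound: "\<And>i v. i \<in> I \<Longrightarrow> v \<in> wcar J1 \<Longrightarrow> wle J2 (Lf i v) (N v)"
    and d: "d \<in> decomp_sums J1 J2 I Lf v"
  shows "wle J2 d (N v)"
proof -
  obtain n idx vs where h: "\<forall>j<n. idx j \<in> I" "\<forall>j<n. vs j \<in> wcar J1" "wsum J1 vs n = v"
      "d = wsum J2 (\<lambda>j. Lf (idx j) (vs j)) n"
    using d unfolding mem_decomp_sums by blast
  have "N v = wsum J2 (\<lambda>j. N (vs j)) n" using linear_map_wsum[OF N, of n vs] h by simp
  then show ?thesis unfolding h(4) using bound h by (simp add: J2.wsum_mono)
qed

lemma bound_le_decomp_sums: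
  assumes N: "linear_map J1 J2 N" and bound: "\<And>i v. i \<in> I \<Longrightarrow> v \<in> wcar J1 \<Longrightarrow> wle J2 (N v) (Lf i v)"
    and d: "d \<in> decomp_sums J1 J2 I Lf v"
  shows "wle J2 (N v) d"
proof -
  obtain n idx vs where h: "\<forall>j<n. idx j \<in> I" "\<forall>j<n. vs j \<in> wcar J1" "wsum J1 vs n = v"
      "d = wsum J2 (\<lambda>j. Lf (idx j) (vs j)) n"
    using d unfolding mem_decomp_sums by blast
  have "N v = wsum J2 (\<lambda>j. N (vs j)) n" using linear_map_wsum[OF N, of n vs] h by simp
  then show ?thesis unfolding h(4) using bound h by (simp add: J2.wsum_mono)
qed

lemma decomp_sums_mono:
  assumes I: "I \<noteq> {}" and vw: "wle J1 v w" and d: "d \<in> decomp_sums J1 J2 I Lf v"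
  shows "\<exists>d'\<in>decomp_sums J1 J2 I Lf w. wle J2 d d'"
proof -
  obtain t where t: "t \<in> wcar J1" "wadd J1 v t = w" using vw unfolding wle_def by blast
  obtain i where i: "i \<in> I" using I by blast
  have "wadd J2 d (Lf i t) \<in> decomp_sums J1 J2 I Lf w"
    using decomp_sums_add[OF d decomp_sums_single[OF i t(1)]] t by simp
  moreover have "wle J2 d (wadd J2 d (Lf i t))"
    using J2.le_add_right d decomp_sums_closed linear_map_closed[OF family_linear[OF i] t(1)] by blast
  ultimately show ?thesis by blast
qed

lemma decomp_sums_add_lower_bound:
  assumes v: "v \<in> wcar J1" and w: "w \<in> wcar J1" and d: "d \<in> decomp_sums J1 J2 I Lf (wadd J1 v w)"
  shows "\<exists>d1\<in>decomp_sums J1 J2 I Lf v. \<exists>d2\<in>decomp_sums J1 J2 I Lf w. wle J2 (wadd J2 d1 d2) d"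
proof -
  obtain n idx u where h: "n \<ge> 1" "\<forall>j<n. idx j \<in> I" "\<forall>j<n. u j \<in> wcar J1"
      "wsum J1 u n = wadd J1 v w" "d = wsum J2 (\<lambda>j. Lf (idx j) (u j)) n"
    using d unfolding mem_decomp_sums by blast
  obtain m1 m2 where m: "\<forall>j<n. m1 j \<in> wcar J1 \<and> m2 j \<in> wcar J1 \<and> wle J1 (wadd J1 (m1 j) (m2 j)) (u j)"
      "wle J1 v (wsum J1 m1 n)" "wle J1 w (wsum J1 m2 n)"
    using J1.add_le_wsum_split[OF _ v w, of u n] h(3,4) v w by auto
  obtain a where a: "\<forall>j<n. a j \<in> wcar J1 \<and> wle J1 (a j) (m1 j)" "wsum J1 a n = v"
    using J1.riesz_decomposition_wsum[OF m(2)] m(1) by blast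
  obtain b where b: "\<forall>j<n. b j \<in> wcar J1 \<and> wle J1 (b j) (m2 j)" "wsum J1 b n = w"
    using J1.riesz_decomposition_wsum[OF m(3)] m(1) by blast
  define d1 d2 where "d1 = wsum J2 (\<lambda>j. Lf (idx j) (a j)) n" and "d2 = wsum J2 (\<lambda>j. Lf (idx j) (b j)) n"
  have d12: "d1 \<in> decomp_sums J1 J2 I Lf v" "d2 \<in> decomp_sums J1 J2 I Lf w"
    unfolding mem_decomp_sums d1_def d2_def using h a b by blast+
  have "wadd J2 d1 d2 = wsum J2 (\<lambda>j. wadd J2 (Lf (idx j) (a j)) (Lf (idx j) (b j))) n"
    unfolding d1_def d2_def
    using J2.wsum_add[of n "\<lambda>j. Lf (idx j) (a j)" "\<lambda>j. Lf (idx j) (b j)"] h a b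
      linear_map_closed family_linear by simp
  also have "\<dots> = wsum J2 (\<lambda>j. Lf (idx j) (wadd J1 (a j) (b j))) n"
    using h a b linear_map_add family_linear by (intro J2.wsum_cong) simp
  also have "wle J2 \<dots> d"
    unfolding h(5)
  proof (rule J2.wsum_mono)
    fix j assume j: "j < n"
    have "wle J1 (wadd J1 (a j) (b j)) (wadd J1 (m1 j) (m2 j))"
      using J1.add_mono a b j by blast
    then have "wle J1 (wadd J1 (a j) (b j)) (u j)"
      using m(1) j J1.le_trans by blast
    then show "wle J2 (Lf (idx j) (wadd J1 (a j) (b j))) (Lf (idx j) (u j))"
      using linear_map_mono family_linear h j by blast
  qed
  finally show ?thesis using d12 by blast
qed

lemma decomp_sums_add_upper_bound:
  assumes I: "I \<noteq> {}" and v: "v \<in> wcar J1" and w: "w \<in> wcar J1"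
    and d: "d \<in> decomp_sums J1 J2 I Lf (wadd J1 v w)"
  shows "\<exists>d1\<in>decomp_sums J1 J2 I Lf v. \<exists>d2\<in>decomp_sums J1 J2 I Lf w. wle J2 d (wadd J2 d1 d2)"
proof -
  obtain n idx u where h: "n \<ge> 1" "\<forall>j<n. idx j \<in> I" "\<forall>j<n. u j \<in> wcar J1"
      "wsum J1 u n = wadd J1 v w" "d = wsum J2 (\<lambda>j. Lf (idx j) (u j)) n"
    using d unfolding mem_decomp_sums by blast
  obtain c e where ce: "\<forall>j<n. c j \<in> wcar J1 \<and> e j \<in> wcar J1 \<and> wle J1 (u j) (wadd J1 (c j) (e j))"
      "wle J1 (wsum J1 c n) v" "wle J1 (wsum J1 e n) w"
    using J1.wsum_le_add_split[OF _ _ v w, of u n] h(3,4) v w by auto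
  define e1 e2 where "e1 = wsum J2 (\<lambda>j. Lf (idx j) (c j)) n" and "e2 = wsum J2 (\<lambda>j. Lf (idx j) (e j)) n"
  have "e1 \<in> decomp_sums J1 J2 I Lf (wsum J1 c n)" "e2 \<in> decomp_sums J1 J2 I Lf (wsum J1 e n)"
    unfolding mem_decomp_sums e1_def e2_def using h ce by blast+
  then obtain d1 d2 where d12: "d1 \<in> decomp_sums J1 J2 I Lf v" "d2 \<in> decomp_sums J1 J2 I Lf w"
      "wle J2 e1 d1" "wle J2 e2 d2"
    using decomp_sums_mono[OF I ce(2)] decomp_sums_mono[OF I ce(3)] by meson
  have "wadd J2 e1 e2 = wsum J2 (\<lambda>j. wadd J2 (Lf (idx j) (c j)) (Lf (idx j) (e j))) n"
    unfolding e1_def e2_def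
    using J2.wsum_add[of n "\<lambda>j. Lf (idx j) (c j)" "\<lambda>j. Lf (idx j) (e j)"] h ce
      linear_map_closed family_linear by simp
  also have "\<dots> = wsum J2 (\<lambda>j. Lf (idx j) (wadd J1 (c j) (e j))) n"
    using h ce linear_map_add family_linear by (intro J2.wsum_cong) simp
  moreover have "wle J2 d (wsum J2 (\<lambda>j. Lf (idx j) (wadd J1 (c j) (e j))) n)"
    unfolding h(5) using linear_map_mono family_linear h ce by (intro J2.wsum_mono) blast
  ultimately have "wle J2 d (wadd J2 e1 e2)" by simp
  then show ?thesis using d12 J2.add_mono J2.le_trans by blast
qed

lemma wsup_decomp_sums_add:
  assumes I: "I \<noteq> {}" and v: "v \<in> wcar J1" and w: "w \<in> wcar J1"
  shows "J2.wsup (decomp_sums J1 J2 I Lf (wadd J1 v w))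
    = wadd J2 (J2.wsup (decomp_sums J1 J2 I Lf v)) (J2.wsup (decomp_sums J1 J2 I Lf w))"
proof -
  let ?D = "decomp_sums J1 J2 I Lf"
  let ?P = "{wadd J2 d1 d2 | d1 d2. d1 \<in> ?D v \<and> d2 \<in> ?D w}"
  obtain i where i: "i \<in> I" using I by blast
  have nonempty: "?D v \<noteq> {}" "?D w \<noteq> {}" using decomp_sums_single[OF i] v w by blast+
  have P: "?P \<subseteq> ?D (wadd J1 v w)" using decomp_sums_add by blast
  have "wle J2 (J2.wsup ?P) (J2.wsup (?D (wadd J1 v w)))"
    using P decomp_sums_closed by (rule J2.wsup_mono_subset)
  moreover have "wle J2 (J2.wsup (?D (wadd J1 v w))) (J2.wsup ?P)"
  proof (rule J2.wsup_mono[OF decomp_sums_closed order.trans[OF P decomp_sums_closed]])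
    fix d assume "d \<in> ?D (wadd J1 v w)"
    then show "\<exists>p\<in>?P. wle J2 d p" using decomp_sums_add_upper_bound[OF I v w] by blast
  qed
  ultimately show ?thesis
    using J2.wsup_add_wsup[OF decomp_sums_closed nonempty(1) decomp_sums_closed nonempty(2)]
      J2.le_antisym by simp
qed

lemma winf_decomp_sums_add:
  assumes v: "v \<in> wcar J1" and w: "w \<in> wcar J1"
  shows "J2.winf (decomp_sums J1 J2 I Lf (wadd J1 v w))
    = wadd J2 (J2.winf (decomp_sums J1 J2 I Lf v)) (J2.winf (decomp_sums J1 J2 I Lf w))"
proof -
  let ?D = "decomp_sums J1 J2 I Lf"
  let ?P = "{wadd J2 d1 d2 | d1 d2. d1 \<in> ?D v \<and> d2 \<in> ?D w}"
  have P: "?P \<subseteq> ?D (wadd J1 v w)" using decomp_sums_add by blast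
  have "wle J2 (J2.winf (?D (wadd J1 v w))) (J2.winf ?P)"
    using P decomp_sums_closed by (rule J2.winf_antimono)
  moreover have "wle J2 (J2.winf ?P) (J2.winf (?D (wadd J1 v w)))"
  proof (rule J2.winf_mono[OF order.trans[OF P decomp_sums_closed] decomp_sums_closed])
    fix d assume "d \<in> ?D (wadd J1 v w)"
    then show "\<exists>p\<in>?P. wle J2 p d" using decomp_sums_add_lower_bound[OF v w] by blast
  qed
  ultimately show ?thesis
    using J2.winf_add_winf[OF decomp_sums_closed decomp_sums_closed] J2.le_antisym by simp
qed

lemma linear_map_wsup_decomp_sums:
  assumes I: "I \<noteq> {}"
  shows "linear_map J1 J2 (\<lambda>v. J2.wsup (decomp_sums J1 J2 I Lf v))"
proof (rule linear_mapI)
  fix l :: real and v assume "0 < l" "v \<in> wcar J1"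
  then show "J2.wsup (decomp_sums J1 J2 I Lf (wsmul J1 l v)) = wsmul J2 l (J2.wsup (decomp_sums J1 J2 I Lf v))"
    using decomp_sums_smul J2.smul_wsup decomp_sums_closed by simp
next
  fix v w assume "v \<in> wcar J1" "w \<in> wcar J1"
  then show "J2.wsup (decomp_sums J1 J2 I Lf (wadd J1 v w))
      = wadd J2 (J2.wsup (decomp_sums J1 J2 I Lf v)) (J2.wsup (decomp_sums J1 J2 I Lf w))"
    by (rule wsup_decomp_sums_add[OF I])
qed (simp_all only: J2.wsup_closed[OF decomp_sums_closed] decomp_sums_zero[OF I] J2.wsup_singleton
    J2.zero_closed)

lemma linear_map_winf_decomp_sums:
  assumes I: "I \<noteq> {}"
  shows "linear_map J1 J2 (\<lambda>v. J2.winf (decomp_sums J1 J2 I Lf v))"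
proof (rule linear_mapI)
  fix l :: real and v assume "0 < l" "v \<in> wcar J1"
  then show "J2.winf (decomp_sums J1 J2 I Lf (wsmul J1 l v)) = wsmul J2 l (J2.winf (decomp_sums J1 J2 I Lf v))"
    using decomp_sums_smul J2.smul_winf decomp_sums_closed by simp
next
  fix v w assume "v \<in> wcar J1" "w \<in> wcar J1"
  then show "J2.winf (decomp_sums J1 J2 I Lf (wadd J1 v w))
      = wadd J2 (J2.winf (decomp_sums J1 J2 I Lf v)) (J2.winf (decomp_sums J1 J2 I Lf w))"
    by (rule winf_decomp_sums_add)
qed (simp_all only: J2.winf_closed[OF decomp_sums_closed] decomp_sums_zero[OF I] J2.winf_singleton
    J2.zero_closed)

lemma Lin_sup_closed: "Lin_sup I Lf \<in> wcar (Lin J1 J2)"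
proof (cases "I = {}")
  case True
  show ?thesis
    using Lin_zero_closed unfolding Lin_sup_def Lin_zero True decomp_sums_empty J2.wsup_empty .
next
  case False
  then show ?thesis unfolding Lin_sup_def by (intro Lin_restrictI linear_map_wsup_decomp_sums)
qed

lemma Lin_inf_closed: "I \<noteq> {} \<Longrightarrow> Lin_inf I Lf \<in> wcar (Lin J1 J2)"
  unfolding Lin_inf_def by (intro Lin_restrictI linear_map_winf_decomp_sums)

lemma is_lub_Lin_sup: "is_lub (Lin J1 J2) (Lf ` I) (Lin_sup I Lf)"
  unfolding is_lub_def
proof (intro conjI ballI impI)
  show S: "Lin_sup I Lf \<in> wcar (Lin J1 J2)" by (rule Lin_sup_closed)
  fix L assume "L \<in> Lf ` I"
  then obtain i where i: "i \<in> I" "L = Lf i" by blast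
  have "\<forall>v\<in>wcar J1. wle J2 (Lf i v) (Lin_sup I Lf v)"
    unfolding Lin_sup_def using J2.le_wsup[OF decomp_sums_closed decomp_sums_single[OF i(1)]] by simp
  then show "wle (Lin J1 J2) L (Lin_sup I Lf)" using Lin_le_iff family S i by auto
next
  fix U assume U: "U \<in> wcar (Lin J1 J2)" and bound: "\<forall>L\<in>Lf ` I. wle (Lin J1 J2) L U"
  have "wle J2 (Lf i v) (U v)" if "i \<in> I" "v \<in> wcar J1" for i v
    using bound Lin_le_iff[OF _ U] family that by blast
  then have "\<forall>v\<in>wcar J1. wle J2 (Lin_sup I Lf v) (U v)"
    unfolding Lin_sup_def using decomp_sums_le_bound[OF LinD[OF U]] Lin_apply_closed[OF U]
    by (auto intro: J2.wsup_le[OF decomp_sums_closed])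
  then show "wle (Lin J1 J2) (Lin_sup I Lf) U" using Lin_le_iff Lin_sup_closed U by blast
qed

lemma is_glb_Lin_inf:
  assumes I: "I \<noteq> {}"
  shows "is_glb (Lin J1 J2) (Lf ` I) (Lin_inf I Lf)"
  unfolding is_glb_def
proof (intro conjI ballI impI)
  show M: "Lin_inf I Lf \<in> wcar (Lin J1 J2)" using Lin_inf_closed[OF I] .
  fix L assume "L \<in> Lf ` I"
  then obtain i where i: "i \<in> I" "L = Lf i" by blast
  have "\<forall>v\<in>wcar J1. wle J2 (Lin_inf I Lf v) (Lf i v)"
    unfolding Lin_inf_def using J2.winf_le[OF decomp_sums_closed decomp_sums_single[OF i(1)]] by simp
  then show "wle (Lin J1 J2) (Lin_inf I Lf) L" using Lin_le_iff family M i by auto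
next
  fix U assume U: "U \<in> wcar (Lin J1 J2)" and bound: "\<forall>L\<in>Lf ` I. wle (Lin J1 J2) U L"
  have "wle J2 (U v) (Lf i v)" if "i \<in> I" "v \<in> wcar J1" for i v
    using bound Lin_le_iff[OF U] family that by blast
  then have "\<forall>v\<in>wcar J1. wle J2 (U v) (Lin_inf I Lf v)"
    unfolding Lin_inf_def using bound_le_decomp_sums[OF LinD[OF U]] Lin_apply_closed[OF U]
    by (auto intro: J2.le_winf[OF decomp_sums_closed])
  then show "wle (Lin J1 J2) U (Lin_inf I Lf)" using Lin_le_iff Lin_inf_closed[OF I] U by blast
qed

lemma decomp_sums_Lin_add:
  assumes L: "L \<in> wcar (Lin J1 J2)" and v: "v \<in> wcar J1"
  shows "decomp_sums J1 J2 I (\<lambda>i. wadd (Lin J1 J2) L (Lf i)) v = wadd J2 (L v) ` decomp_sums J1 J2 I Lf v"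
proof -
  have shift: "wsum J2 (\<lambda>j. wadd (Lin J1 J2) L (Lf (idx j)) (vs j)) n
      = wadd J2 (L (wsum J1 vs n)) (wsum J2 (\<lambda>j. Lf (idx j) (vs j)) n)"
    if idx: "\<forall>j<n. idx j \<in> I" and vs: "\<forall>j<n. vs j \<in> wcar J1" for n idx vs
  proof -
    have "wsum J2 (\<lambda>j. wadd (Lin J1 J2) L (Lf (idx j)) (vs j)) n
        = wsum J2 (\<lambda>j. wadd J2 (L (vs j)) (Lf (idx j) (vs j))) n"
      using vs unfolding Lin_add by (intro J2.wsum_cong) simp
    also have "\<dots> = wadd J2 (wsum J2 (\<lambda>j. L (vs j)) n) (wsum J2 (\<lambda>j. Lf (idx j) (vs j)) n)"
      using J2.wsum_add idx vs Lin_apply_closed[OF L] linear_map_closed family_linear by simp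
    also have "\<dots> = wadd J2 (L (wsum J1 vs n)) (wsum J2 (\<lambda>j. Lf (idx j) (vs j)) n)"
      using linear_map_wsum[OF LinD[OF L], of n vs] vs by simp
    finally show ?thesis .
  qed
  show ?thesis
  proof (intro set_eqI iffI)
    fix d assume "d \<in> decomp_sums J1 J2 I (\<lambda>i. wadd (Lin J1 J2) L (Lf i)) v"
    then obtain n idx vs where h: "n \<ge> 1" "\<forall>j<n. idx j \<in> I" "\<forall>j<n. vs j \<in> wcar J1" "wsum J1 vs n = v"
        "d = wsum J2 (\<lambda>j. wadd (Lin J1 J2) L (Lf (idx j)) (vs j)) n"
      unfolding mem_decomp_sums by blast
    then have "wsum J2 (\<lambda>j. Lf (idx j) (vs j)) n \<in> decomp_sums J1 J2 I Lf v"
      unfolding mem_decomp_sums by blast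
    then show "d \<in> wadd J2 (L v) ` decomp_sums J1 J2 I Lf v"
      using shift[OF h(2,3)] h(4,5) by simp
  next
    fix d assume "d \<in> wadd J2 (L v) ` decomp_sums J1 J2 I Lf v"
    then obtain d' where d': "d' \<in> decomp_sums J1 J2 I Lf v" "d = wadd J2 (L v) d'" by blast
    then obtain n idx vs where h: "n \<ge> 1" "\<forall>j<n. idx j \<in> I" "\<forall>j<n. vs j \<in> wcar J1" "wsum J1 vs n = v"
        "d = wadd J2 (L v) (wsum J2 (\<lambda>j. Lf (idx j) (vs j)) n)"
      unfolding mem_decomp_sums by blast
    then have "d = wsum J2 (\<lambda>j. wadd (Lin J1 J2) L (Lf (idx j)) (vs j)) n"
      using shift[OF h(2,3)] by simp
    then show "d \<in> decomp_sums J1 J2 I (\<lambda>i. wadd (Lin J1 J2) L (Lf i)) v"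
      unfolding mem_decomp_sums using h by blast
  qed
qed

end

definition Lin_top :: "'a \<Rightarrow> 'b" where
  "Lin_top = (\<lambda>v. if v \<in> wcar J1 then (if v = wzero J1 then wzero J2 else J2.wtop) else undefined)"

lemma Lin_top_closed: "Lin_top \<in> wcar (Lin J1 J2)"
  unfolding Lin_top_def
proof (intro Lin_restrictI linear_mapI)
  fix v w assume v: "v \<in> wcar J1" and w: "w \<in> wcar J1"
  have "wadd J1 v w = wzero J1 \<longleftrightarrow> v = wzero J1 \<and> w = wzero J1"
    using J1.add_eq_zero[OF v w] J1.add_eq_zero[OF w v] J1.add_commute[OF v w] by auto
  then show "(if wadd J1 v w = wzero J1 then wzero J2 else J2.wtop)
      = wadd J2 (if v = wzero J1 then wzero J2 else J2.wtop) (if w = wzero J1 then wzero J2 else J2.wtop)"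
    using J2.add_wtop J2.add_commute by auto
next
  fix l :: real and v assume "0 < l" "v \<in> wcar J1"
  then show "(if wsmul J1 l v = wzero J1 then wzero J2 else J2.wtop)
      = wsmul J2 l (if v = wzero J1 then wzero J2 else J2.wtop)"
    using J1.smul_eq_zero J2.smul_wtop by auto
qed auto

lemma Lin_top_least: "N \<in> wcar (Lin J1 J2) \<Longrightarrow> wle (Lin J1 J2) N Lin_top"
  using Lin_le_iff[OF _ Lin_top_closed] linear_map_zero[OF LinD] J2.le_wtop Lin_apply_closed
  unfolding Lin_top_def by simp

lemma add_Lin_top:
  assumes N: "N \<in> wcar (Lin J1 J2)"
  shows "wadd (Lin J1 J2) N Lin_top = Lin_top"
  unfolding Lin_add Lin_top_def
  using linear_map_zero[OF LinD[OF N]] J2.add_wtop Lin_apply_closed[OF N] by (auto intro!: ext)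

lemma is_glb_empty_Lin: "is_glb (Lin J1 J2) {} Lin_top"
  unfolding is_glb_def using Lin_top_closed Lin_top_least by blast

lemma is_glb_Lin_add:
  assumes A: "A \<subseteq> wcar (Lin J1 J2)" and L: "L \<in> wcar (Lin J1 J2)" and M: "is_glb (Lin J1 J2) A M"
  shows "is_glb (Lin J1 J2) (wadd (Lin J1 J2) L ` A) (wadd (Lin J1 J2) L M)"
proof (cases "A = {}")
  case True
  then show ?thesis
    using Lin.glb_unique[OF M] is_glb_empty_Lin add_Lin_top[OF L] by simp
next
  case False
  have M_eq: "M = Lin_inf A id" using Lin.glb_unique[OF M] is_glb_Lin_inf[of id A] A False by simp
  have shifted: "wadd (Lin J1 J2) L ` A \<subseteq> wcar (Lin J1 J2)" using Lin_add_closed L A by auto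
  have "Lin_inf A (wadd (Lin J1 J2) L) = wadd (Lin J1 J2) L (Lin_inf A id)"
  proof (rule Lin_eqI)
    show "Lin_inf A (wadd (Lin J1 J2) L) \<in> wcar (Lin J1 J2)"
      using Lin_inf_closed[OF shifted False] .
    show "wadd (Lin J1 J2) L (Lin_inf A id) \<in> wcar (Lin J1 J2)"
      using Lin_add_closed[OF L Lin_inf_closed[of id A]] A False by simp
    fix v assume v: "v \<in> wcar J1"
    have "Lin_inf A (wadd (Lin J1 J2) L) v = J2.winf (wadd J2 (L v) ` decomp_sums J1 J2 A id v)"
      using decomp_sums_Lin_add[of id A L v] A L v unfolding Lin_inf_def by simp
    also have "\<dots> = wadd J2 (L v) (Lin_inf A id v)"
      using J2.winf_add[OF decomp_sums_closed[of id A] Lin_apply_closed[OF L v]] A v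
      unfolding Lin_inf_def by simp
    also have "\<dots> = wadd (Lin J1 J2) L (Lin_inf A id) v"
      using v unfolding Lin_add by simp
    finally show "Lin_inf A (wadd (Lin J1 J2) L) v = wadd (Lin J1 J2) L (Lin_inf A id) v" .
  qed
  then show ?thesis
    using is_glb_Lin_inf[OF shifted False] M_eq by simp
qed

lemma cone_with_joins_Lin: "cone_with_joins (Lin J1 J2)"
  unfolding cone_with_joins_def cone_def
proof (intro conjI allI impI ballI)
  show "wedge (Lin J1 J2)" by (rule wedge_Lin)
next
  fix D assume "directed (Lin J1 J2) D"
  then have "D \<subseteq> wcar (Lin J1 J2)" unfolding directed_def by blast
  then show "\<exists>S. is_lub (Lin J1 J2) D S" using is_lub_Lin_sup[of id D] by auto
next
  fix A assume A: "A \<subseteq> wcar (Lin J1 J2)"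
  show "\<exists>M. is_glb (Lin J1 J2) A M"
    using is_glb_empty_Lin is_glb_Lin_inf[of id A] A by (cases "A = {}") auto
  fix L M assume "L \<in> wcar (Lin J1 J2)" "is_glb (Lin J1 J2) A M"
  then show "is_glb (Lin J1 J2) (wadd (Lin J1 J2) L ` A) (wadd (Lin J1 J2) L M)"
    using is_glb_Lin_add A by blast
qed

lemma is_lub_Lin_decomp_sums:
  assumes family: "Lf ` I \<subseteq> wcar (Lin J1 J2)" and S: "is_lub (Lin J1 J2) (Lf ` I) S" and v: "v \<in> wcar J1"
  shows "is_lub J2 (decomp_sums J1 J2 I Lf v) (S v)"
proof -
  have "S = Lin_sup I Lf" using Lin.lub_unique[OF S is_lub_Lin_sup[OF family]] .
  then show ?thesis using J2.wsup_lub[OF decomp_sums_closed[OF family]] v unfolding Lin_sup_def by simp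
qed

lemma is_glb_Lin_decomp_sums:
  assumes family: "Lf ` I \<subseteq> wcar (Lin J1 J2)" and I: "I \<noteq> {}"
    and M: "is_glb (Lin J1 J2) (Lf ` I) M" and v: "v \<in> wcar J1"
  shows "is_glb J2 (decomp_sums J1 J2 I Lf v) (M v)"
proof -
  have "M = Lin_inf I Lf" using Lin.glb_unique[OF M is_glb_Lin_inf[OF family I]] .
  then show ?thesis using J2.winf_glb[OF decomp_sums_closed[OF family]] v unfolding Lin_inf_def by simp
qed

lemma is_glb_empty_Lin_iff:
  "is_glb (Lin J1 J2) {} M \<longleftrightarrow>
     M \<in> wcar (Lin J1 J2) \<and> M (wzero J1) = wzero J2 \<and>
     (\<forall>v\<in>wcar J1. v \<noteq> wzero J1 \<longrightarrow> is_lub J2 (wcar J2) (M v))"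
proof
  assume "is_glb (Lin J1 J2) {} M"
  then have "M = Lin_top" using Lin.glb_unique is_glb_empty_Lin by blast
  then show "M \<in> wcar (Lin J1 J2) \<and> M (wzero J1) = wzero J2 \<and>
      (\<forall>v\<in>wcar J1. v \<noteq> wzero J1 \<longrightarrow> is_lub J2 (wcar J2) (M v))"
    using Lin_top_closed J2.wtop_lub unfolding Lin_top_def by simp
next
  assume M: "M \<in> wcar (Lin J1 J2) \<and> M (wzero J1) = wzero J2 \<and>
      (\<forall>v\<in>wcar J1. v \<noteq> wzero J1 \<longrightarrow> is_lub J2 (wcar J2) (M v))"
  have "M = Lin_top"
  proof (rule Lin_eqI[OF _ Lin_top_closed])
    fix v assume "v \<in> wcar J1"
    then show "M v = Lin_top v"
      using M J2.lub_unique[OF _ J2.wtop_lub] unfolding Lin_top_def by auto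
  qed (use M in blast)
  then show "is_glb (Lin J1 J2) {} M" using is_glb_empty_Lin by simp
qed

lemma is_lub_empty_Lin_iff: "is_lub (Lin J1 J2) {} S \<longleftrightarrow> S = wzero (Lin J1 J2)"
proof -
  have "wle (Lin J1 J2) (wzero (Lin J1 J2)) U" if "U \<in> wcar (Lin J1 J2)" for U
    using Lin.zero_le that .
  then have "is_lub (Lin J1 J2) {} (wzero (Lin J1 J2))"
    unfolding is_lub_def using Lin_zero_closed by blast
  then show ?thesis using Lin.lub_unique by blast
qed

lemma wsum_pair_family:
  assumes L1: "L1 \<in> wcar (Lin J1 J2)" and L2: "L2 \<in> wcar (Lin J1 J2)"
    and idx: "\<forall>j<n. idx j \<in> {L1, L2}" and vs: "\<forall>j<n. vs j \<in> wcar J1"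
  shows "\<exists>x1 x2. x1 \<in> wcar J1 \<and> x2 \<in> wcar J1 \<and> wadd J1 x1 x2 = wsum J1 vs n \<and>
    wadd J2 (L1 x1) (L2 x2) = wsum J2 (\<lambda>j. idx j (vs j)) n"
  using idx vs
proof (induction n)
  case 0
  then show ?case
    using linear_map_zero[OF LinD[OF L1]] linear_map_zero[OF LinD[OF L2]] by (intro exI[of _ "wzero J1"]) auto
next
  case (Suc n)
  then obtain x1 x2 where x: "x1 \<in> wcar J1" "x2 \<in> wcar J1" "wadd J1 x1 x2 = wsum J1 vs n"
     "wadd J2 (L1 x1) (L2 x2) = wsum J2 (\<lambda>j. idx j (vs j)) n" by auto
  have vn: "vs n \<in> wcar J1" using Suc.prems by auto
  have closed: "L1 x1 \<in> wcar J2" "L2 x2 \<in> wcar J2" "L1 (vs n) \<in> wcar J2" "L2 (vs n) \<in> wcar J2"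
    using Lin_apply_closed L1 L2 x vn by auto
  consider "idx n = L1" | "idx n = L2" using Suc.prems by auto
  then show ?case
  proof cases
    case 1
    have "wadd J1 (wadd J1 x1 (vs n)) x2 = wsum J1 vs (Suc n)"
      using x vn J1.add_right_commute[of x1 "vs n" x2] by simp
    moreover have "wadd J2 (L1 (wadd J1 x1 (vs n))) (L2 x2) = wsum J2 (\<lambda>j. idx j (vs j)) (Suc n)"
      using x vn 1 linear_map_add[OF LinD[OF L1] x(1) vn] closed
        J2.add_right_commute[of "L1 x1" "L1 (vs n)" "L2 x2"] by simp
    ultimately show ?thesis using x vn by (intro exI[of _ "wadd J1 x1 (vs n)"] exI[of _ x2]) simp
  next
    case 2
    have "wadd J1 x1 (wadd J1 x2 (vs n)) = wsum J1 vs (Suc n)"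
      using x vn by (simp flip: J1.add_assoc)
    moreover have "wadd J2 (L1 x1) (L2 (wadd J1 x2 (vs n))) = wsum J2 (\<lambda>j. idx j (vs j)) (Suc n)"
      using x vn 2 linear_map_add[OF LinD[OF L2] x(2) vn] closed by (simp flip: J2.add_assoc)
    ultimately show ?thesis using x vn by (intro exI[of _ x1] exI[of _ "wadd J1 x2 (vs n)"]) simp
  qed
qed

lemma decomp_sums_pair:
  assumes L1: "L1 \<in> wcar (Lin J1 J2)" and L2: "L2 \<in> wcar (Lin J1 J2)"
  shows "decomp_sums J1 J2 {L1, L2} id v =
    {wadd J2 (L1 v1) (L2 v2) | v1 v2. v1 \<in> wcar J1 \<and> v2 \<in> wcar J1 \<and> wadd J1 v1 v2 = v}"
proof (intro set_eqI iffI)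
  fix d assume "d \<in> decomp_sums J1 J2 {L1, L2} id v"
  then obtain n idx vs where h: "\<forall>j<n. idx j \<in> {L1, L2}" "\<forall>j<n. vs j \<in> wcar J1" "wsum J1 vs n = v"
      "d = wsum J2 (\<lambda>j. idx j (vs j)) n"
    unfolding mem_decomp_sums by auto
  obtain x1 x2 where "x1 \<in> wcar J1" "x2 \<in> wcar J1" "wadd J1 x1 x2 = wsum J1 vs n"
      "wadd J2 (L1 x1) (L2 x2) = wsum J2 (\<lambda>j. idx j (vs j)) n"
    using wsum_pair_family[OF L1 L2 h(1,2)] by blast
  then have "d = wadd J2 (L1 x1) (L2 x2) \<and> x1 \<in> wcar J1 \<and> x2 \<in> wcar J1 \<and> wadd J1 x1 x2 = v"
    using h by simp
  then show "d \<in> {wadd J2 (L1 v1) (L2 v2) | v1 v2. v1 \<in> wcar J1 \<and> v2 \<in> wcar J1 \<and> wadd J1 v1 v2 = v}"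
    by blast
next
  fix d assume "d \<in> {wadd J2 (L1 v1) (L2 v2) | v1 v2. v1 \<in> wcar J1 \<and> v2 \<in> wcar J1 \<and> wadd J1 v1 v2 = v}"
  then obtain v1 v2 where h: "v1 \<in> wcar J1" "v2 \<in> wcar J1" "wadd J1 v1 v2 = v" "d = wadd J2 (L1 v1) (L2 v2)"
    by blast
  define idx where "idx = (\<lambda>j::nat. if j = 0 then L1 else L2)"
  define vs where "vs = (\<lambda>j::nat. if j = 0 then v1 else v2)"
  have "wsum J1 vs 2 = v" "wsum J2 (\<lambda>j. id (idx j) (vs j)) 2 = d"
    using h Lin_apply_closed[OF L1 h(1)] by (simp_all add: numeral_2_eq_2 vs_def idx_def)
  moreover have "\<forall>j<2. idx j \<in> {L1, L2}" "\<forall>j<2. vs j \<in> wcar J1"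
    using h by (auto simp: idx_def vs_def)
  ultimately show "d \<in> decomp_sums J1 J2 {L1, L2} id v"
    unfolding mem_decomp_sums by (intro exI[of _ 2] exI[of _ idx] exI[of _ vs]) auto
qed

lemma is_lub_Lin_pair:
  assumes "L1 \<in> wcar (Lin J1 J2)" "L2 \<in> wcar (Lin J1 J2)" "is_lub (Lin J1 J2) {L1, L2} S" "v \<in> wcar J1"
  shows "is_lub J2 {wadd J2 (L1 v1) (L2 v2) | v1 v2. v1 \<in> wcar J1 \<and> v2 \<in> wcar J1 \<and> wadd J1 v1 v2 = v} (S v)"
  using is_lub_Lin_decomp_sums[of id "{L1, L2}" S v] decomp_sums_pair assms by simp

lemma is_glb_Lin_pair:
  assumes "L1 \<in> wcar (Lin J1 J2)" "L2 \<in> wcar (Lin J1 J2)" "is_glb (Lin J1 J2) {L1, L2} M" "v \<in> wcar J1"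
  shows "is_glb J2 {wadd J2 (L1 v1) (L2 v2) | v1 v2. v1 \<in> wcar J1 \<and> v2 \<in> wcar J1 \<and> wadd J1 v1 v2 = v} (M v)"
  using is_glb_Lin_decomp_sums[of id "{L1, L2}" M v] decomp_sums_pair assms by simp

end

theorem mainTheorem11:
  fixes J1 :: "('a, 'm) pwstr_scheme" and J2 :: "('b, 'n) pwstr_scheme"
  assumes "cone_with_joins J1" and "cone_with_joins J2"
  shows "cone_with_joins (Lin J1 J2)
    \<and> (\<forall>(I :: 'i set) Lf. Lf ` I \<subseteq> wcar (Lin J1 J2) \<longrightarrow>
           (\<exists>S. is_lub (Lin J1 J2) (Lf ` I) S) \<and>
           (\<forall>S. is_lub (Lin J1 J2) (Lf ` I) S \<longrightarrow>
              (\<forall>v\<in>wcar J1. is_lub J2 (decomp_sums J1 J2 I Lf v) (S v))))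
    \<and> (\<forall>(I :: 'i set) Lf. Lf ` I \<subseteq> wcar (Lin J1 J2) \<longrightarrow> I \<noteq> {} \<longrightarrow>
           (\<exists>M. is_glb (Lin J1 J2) (Lf ` I) M) \<and>
           (\<forall>M. is_glb (Lin J1 J2) (Lf ` I) M \<longrightarrow>
              (\<forall>v\<in>wcar J1. is_glb J2 (decomp_sums J1 J2 I Lf v) (M v))))
    \<and> (\<forall>M. is_glb (Lin J1 J2) {} M \<longleftrightarrow>
           M \<in> wcar (Lin J1 J2) \<and> M (wzero J1) = wzero J2 \<and>
           (\<forall>v\<in>wcar J1. v \<noteq> wzero J1 \<longrightarrow> is_lub J2 (wcar J2) (M v)))
    \<and> (\<forall>S. is_lub (Lin J1 J2) {} S \<longleftrightarrow> S = wzero (Lin J1 J2))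
    \<and> (\<forall>L1 L2 S. L1 \<in> wcar (Lin J1 J2) \<longrightarrow> L2 \<in> wcar (Lin J1 J2) \<longrightarrow>
           is_lub (Lin J1 J2) {L1, L2} S \<longrightarrow>
           (\<forall>v\<in>wcar J1. is_lub J2 {wadd J2 (L1 v1) (L2 v2) | v1 v2.
                          v1 \<in> wcar J1 \<and> v2 \<in> wcar J1 \<and> wadd J1 v1 v2 = v} (S v)))
    \<and> (\<forall>L1 L2 M. L1 \<in> wcar (Lin J1 J2) \<longrightarrow> L2 \<in> wcar (Lin J1 J2) \<longrightarrow>
           is_glb (Lin J1 J2) {L1, L2} M \<longrightarrow>
           (\<forall>v\<in>wcar J1. is_glb J2 {wadd J2 (L1 v1) (L2 v2) | v1 v2.
                          v1 \<in> wcar J1 \<and> v2 \<in> wcar J1 \<and> wadd J1 v1 v2 = v} (M v)))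
    \<and> (\<forall>L M. L \<in> wcar (Lin J1 J2) \<longrightarrow> M \<in> wcar (Lin J1 J2) \<longrightarrow>
           (wle (Lin J1 J2) L M \<longleftrightarrow> (\<forall>v\<in>wcar J1. wle J2 (L v) (M v))))"
proof -
  interpret linear_maps_with_joins J1 J2
    using assms by (intro linear_maps_with_joins.intro cone_with_joins_structure.intro)
  show ?thesis
  proof (intro conjI allI impI ballI)
    fix I :: "'i set" and Lf assume family: "Lf ` I \<subseteq> wcar (Lin J1 J2)"
    show "\<exists>S. is_lub (Lin J1 J2) (Lf ` I) S" using is_lub_Lin_sup[OF family] by blast
    show "is_lub J2 (decomp_sums J1 J2 I Lf v) (S v)"
      if "is_lub (Lin J1 J2) (Lf ` I) S" "v \<in> wcar J1" for S v
      using is_lub_Lin_decomp_sums[OF family that] .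
    assume I: "I \<noteq> {}"
    show "\<exists>M. is_glb (Lin J1 J2) (Lf ` I) M" using is_glb_Lin_inf[OF family I] by blast
    show "is_glb J2 (decomp_sums J1 J2 I Lf v) (M v)"
      if "is_glb (Lin J1 J2) (Lf ` I) M" "v \<in> wcar J1" for M v
      using is_glb_Lin_decomp_sums[OF family I that] .
  qed (simp_all add: cone_with_joins_Lin is_glb_empty_Lin_iff is_lub_empty_Lin_iff
      is_lub_Lin_pair is_glb_Lin_pair Lin_le_iff)
qed

end
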